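(* Let $f:(M^n,h)\to(\tilde M^{n+1},\tilde h)$ be an isometrically immersed hypersurface in a Riemannian manifold, and let $\tilde W$ be a Killing vector field of $\tilde h$ with $\|\tilde W\|_{\tilde h}<1$. Let $N$ be a unit normal vector field along $f$, $w=\langle N,\tilde W\rangle$, and $H$ the mean curvature of $f$ with respect to $N$. Then for any $\tilde X\in T\tilde M$ along $f$, \[B^{\eta\beta}\tilde W_\beta\tilde W_{\alpha|\eta}\tilde W^\alpha=\langle\nabla^{\tilde M}_{df(W)}\tilde W,\tilde W\rangle,\qquad \tilde W_\tau(\delta^\tau_\gamma-B^\tau_\gamma)\tilde X^\gamma=w\langle N,\tilde X\rangle,\] \[B^{\eta\beta}\tilde W_\beta\tilde W_{\alpha|\eta}(\delta^\alpha_\gamma-B^\alpha_\gamma)\tilde X^\gamma=\langle\nabla^{\tilde M}_{df(W)}\tilde W,N\rangle\langle N,\tilde X\rangle,\qquad h^{ij}\tau^\alpha_{ij}\tilde W_\alpha=nHw,\] \[\tilde W_\delta\tilde W_\tau A^{i\delta}A^{j\tau}\tau^\alpha_{ij}\tilde X_\alpha=-\Big[\langle df(\nabla w),\tilde W\rangle+\tfrac12N(\|\tilde W\|^2_{\tilde h})\Big]\langle N,\tilde X\rangle,\] \[\tilde W_\delta\tilde W_\tau A^{i\delta}A^{j\tau}\tau^\alpha_{ij}\tilde W_\alpha=-\Big[\langle df(\nabla w),\tilde W\rangle+\tfrac12N(\|\tilde W\|^2_{\tilde h})\Big]w,\] \[\langle\nabla^{\tilde M}_{df(W)}\tilde W,N\rangle=-\tfrac12N(\|\tilde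 W\|^2_{\tilde h}),\qquad \langle\nabla^{\tilde M}_{df(W)}\tilde W,\tilde W\rangle=-\tfrac12N(\|\tilde W\|^2_{\tilde h})\,w.\]
   Context: $\langle\cdot,\cdot\rangle$ denotes $\tilde h$, $\nabla^{\tilde M}$ its Levi-Civita connection. Locally $f$ is $\tilde x^\alpha=f^\alpha(x^1,\dots,x^n)$, indices $1\le i,j,k\le n$, $1\le\alpha,\beta,\gamma,\eta,\delta,\tau\le n+1$, summation convention. $z^\alpha_i=\partial f^\alpha/\partial x^i$, $h_{ij}=\tilde h_{\alpha\beta}z^\alpha_iz^\beta_j$, $(h^{ij})=(h_{ij})^{-1}$, $\tilde W_\alpha=\tilde h_{\alpha\beta}\tilde W^\beta$, $\tilde X_\alpha=\tilde h_{\alpha\beta}\tilde X^\beta$, $A^{i\alpha}=h^{ij}z^\alpha_j$, $B^{\alpha\beta}=h^{ij}z^\alpha_iz^\beta_j$, $B^\alpha_\beta=B^{\alpha\delta}\tilde h_{\delta\beta}$. $\tilde W^\beta_{|\eta}$ are the components of $\nabla^{\tilde M}\tilde W$, $\tilde W_{\alpha|\eta}=\tilde h_{\alpha\beta}\tilde W^\beta_{|\eta}$. $W$ is the vector field on $M$ with components $W^j=h^{ij}\tilde W_\alpha z^\alpha_i$. $\tau^\alpha_{ij}=\frac{\partial^2f^\alpha}{\partial x^i\partial x^j}+\tilde\Gamma^\alpha_{\tau\delta}z^\tau_jz^\delta_i-\Gamma^k_{ij}z^\alpha_k$ is the second fundamental form of $f$, and $H$ is defined by $h^{ij}\tau^\alpha_{ij}\partial/\partial\tilde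 x^\alpha=nHN$. $\nabla w$ is the gradient of $w$ with respect to $h$. *)

theory Defs
  imports "HOL-Analysis.Analysis"
begin

text \<open>Everything is in local coordinates: M is represented by an open chart domain
U in real^'n, the ambient manifold by an open chart domain V in real^'m with
CARD('m) = CARD('n) + 1.  Vectors/tensors are component arrays.\<close>

definition pd :: "'k::finite \<Rightarrow> (real^'k \<Rightarrow> 'b::real_normed_vector) \<Rightarrow> real^'k \<Rightarrow> 'b" where
  "pd i g x = vector_derivative (\<lambda>t. g (x + t *\<^sub>R axis i 1)) (at 0)"

fun iter_pd :: "'k::finite list \<Rightarrow> (real^'k \<Rightarrow> 'b::real_normed_vector) \<Rightarrow> real^'k \<Rightarrow> 'b" where
  "iter_pd [] g = g"
| "iter_pd (i # is) g = pd i (iter_pd is g)"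

definition Csmooth_on :: "(real^'k::finite) set \<Rightarrow> (real^'k \<Rightarrow> 'b::real_normed_vector) \<Rightarrow> bool" where
  "Csmooth_on S g \<longleftrightarrow> (\<forall>is. iter_pd is g differentiable_on S)"

definition kdelta :: "'k \<Rightarrow> 'k \<Rightarrow> real" where
  "kdelta a b = (if a = b then 1 else 0)"

definition g_inner :: "(real^'k \<Rightarrow> real^'k^'k) \<Rightarrow> real^'k \<Rightarrow> real^'k \<Rightarrow> real^'k \<Rightarrow> real" where
  "g_inner g p u v = (\<Sum>a\<in>UNIV. \<Sum>b\<in>UNIV. g p $ a $ b * u $ a * v $ b)"

definition lower :: "(real^'k \<Rightarrow> real^'k^'k) \<Rightarrow> real^'k \<Rightarrow> real^'k \<Rightarrow> real^'k::finite" where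
  "lower g p u = (\<chi> a. \<Sum>b\<in>UNIV. g p $ a $ b * u $ b)"

definition christoffel :: "(real^'k \<Rightarrow> real^'k^'k) \<Rightarrow> real^'k \<Rightarrow> 'k \<Rightarrow> 'k \<Rightarrow> 'k \<Rightarrow> real" where
  "christoffel g p a b c = (1/2) * (\<Sum>d\<in>UNIV. matrix_inv (g p) $ a $ d *
      (pd b (\<lambda>q. g q $ d $ c) p + pd c (\<lambda>q. g q $ d $ b) p - pd d (\<lambda>q. g q $ b $ c) p))"

definition riemannian_metric_on :: "(real^'k::finite) set \<Rightarrow> (real^'k \<Rightarrow> real^'k^'k) \<Rightarrow> bool" where
  "riemannian_metric_on V g \<longleftrightarrow> open V \<and> Csmooth_on V g \<and>
     (\<forall>p\<in>V. (\<forall>a b. g p $ a $ b = g p $ b $ a) \<and> (\<forall>u. u \<noteq> 0 \<longrightarrow> g_inner g p u u > 0))"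

definition killing_on :: "(real^'k::finite) set \<Rightarrow> (real^'k \<Rightarrow> real^'k^'k) \<Rightarrow> (real^'k \<Rightarrow> real^'k) \<Rightarrow> bool" where
  "killing_on V g W \<longleftrightarrow> Csmooth_on V W \<and>
     (\<forall>p\<in>V. \<forall>a b. (\<Sum>c\<in>UNIV. W p $ c * pd c (\<lambda>q. g q $ a $ b) p)
                   + (\<Sum>c\<in>UNIV. g p $ c $ b * pd a (\<lambda>q. W q $ c) p)
                   + (\<Sum>c\<in>UNIV. g p $ a $ c * pd b (\<lambda>q. W q $ c) p) = 0)"

definition cov_deriv :: "(real^'k \<Rightarrow> real^'k^'k) \<Rightarrow> (real^'k \<Rightarrow> real^'k) \<Rightarrow> real^'k \<Rightarrow> 'k \<Rightarrow> 'k \<Rightarrow> real" where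
  "cov_deriv g W p b e = pd e (\<lambda>q. W q $ b) p + (\<Sum>c\<in>UNIV. christoffel g p b e c * W p $ c)"

definition covd_along :: "(real^'k \<Rightarrow> real^'k^'k) \<Rightarrow> (real^'k \<Rightarrow> real^'k) \<Rightarrow> real^'k \<Rightarrow> real^'k \<Rightarrow> real^'k::finite" where
  "covd_along g W p v = (\<chi> b. \<Sum>e\<in>UNIV. v $ e * cov_deriv g W p b e)"

abbreviation zf :: "(real^'n::finite \<Rightarrow> real^'m::finite) \<Rightarrow> real^'n \<Rightarrow> 'n \<Rightarrow> real^'m" where
  "zf f x i \<equiv> pd i f x"

definition induced_metric :: "(real^'m::finite \<Rightarrow> real^'m^'m) \<Rightarrow> (real^'n::finite \<Rightarrow> real^'m) \<Rightarrow> real^'n \<Rightarrow> real^'n^'n" where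
  "induced_metric g f x = (\<chi> i j. \<Sum>a\<in>UNIV. \<Sum>b\<in>UNIV. g (f x) $ a $ b * zf f x i $ a * zf f x j $ b)"

definition hinv :: "(real^'m::finite \<Rightarrow> real^'m^'m) \<Rightarrow> (real^'n::finite \<Rightarrow> real^'m) \<Rightarrow> real^'n \<Rightarrow> real^'n^'n" where
  "hinv g f x = matrix_inv (induced_metric g f x)"

definition immersion_on :: "(real^'n::finite) set \<Rightarrow> (real^'n \<Rightarrow> real^'m::finite) \<Rightarrow> bool" where
  "immersion_on U f \<longleftrightarrow> open U \<and> Csmooth_on U f \<and>
     (\<forall>y\<in>U. \<forall>v::real^'n. (\<Sum>i\<in>UNIV. v $ i *\<^sub>R zf f y i) = 0 \<longrightarrow> v = 0)"

definition unit_normal_on :: "(real^'n::finite) set \<Rightarrow> (real^'m::finite \<Rightarrow> real^'m^'m) \<Rightarrow> (real^'n \<Rightarrow> real^'m) \<Rightarrow> (real^'n \<Rightarrow> real^'m) \<Rightarrow> bool" where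
  "unit_normal_on U g f N \<longleftrightarrow> Csmooth_on U N \<and>
     (\<forall>y\<in>U. g_inner g (f y) (N y) (N y) = 1 \<and> (\<forall>i. g_inner g (f y) (N y) (zf f y i) = 0))"

definition sff :: "(real^'m::finite \<Rightarrow> real^'m^'m) \<Rightarrow> (real^'n::finite \<Rightarrow> real^'m) \<Rightarrow> real^'n \<Rightarrow> 'm \<Rightarrow> 'n \<Rightarrow> 'n \<Rightarrow> real" where
  "sff g f x a i j = pd i (\<lambda>y. zf f y j $ a) x
     + (\<Sum>t\<in>UNIV. \<Sum>d\<in>UNIV. christoffel g (f x) a t d * zf f x j $ t * zf f x i $ d)
     - (\<Sum>k\<in>UNIV. christoffel (induced_metric g f) x k i j * zf f x k $ a)"

definition Acoef :: "(real^'m::finite \<Rightarrow> real^'m^'m) \<Rightarrow> (real^'n::finite \<Rightarrow> real^'m) \<Rightarrow> real^'n \<Rightarrow> 'n \<Rightarrow> 'm \<Rightarrow> real" where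
  "Acoef g f x i a = (\<Sum>j\<in>UNIV. hinv g f x $ i $ j * zf f x j $ a)"

definition Bup :: "(real^'m::finite \<Rightarrow> real^'m^'m) \<Rightarrow> (real^'n::finite \<Rightarrow> real^'m) \<Rightarrow> real^'n \<Rightarrow> 'm \<Rightarrow> 'm \<Rightarrow> real" where
  "Bup g f x a b = (\<Sum>i\<in>UNIV. \<Sum>j\<in>UNIV. hinv g f x $ i $ j * zf f x i $ a * zf f x j $ b)"

definition Bmix :: "(real^'m::finite \<Rightarrow> real^'m^'m) \<Rightarrow> (real^'n::finite \<Rightarrow> real^'m) \<Rightarrow> real^'n \<Rightarrow> 'm \<Rightarrow> 'm \<Rightarrow> real" where
  "Bmix g f x a b = (\<Sum>d\<in>UNIV. Bup g f x a d * g (f x) $ d $ b)"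

definition tang_field :: "(real^'m::finite \<Rightarrow> real^'m^'m) \<Rightarrow> (real^'m \<Rightarrow> real^'m) \<Rightarrow> (real^'n::finite \<Rightarrow> real^'m) \<Rightarrow> real^'n \<Rightarrow> real^'n" where
  "tang_field g W f x = (\<chi> j. \<Sum>i\<in>UNIV. \<Sum>a\<in>UNIV. hinv g f x $ i $ j * lower g (f x) (W (f x)) $ a * zf f x i $ a)"

definition push :: "(real^'n::finite \<Rightarrow> real^'m::finite) \<Rightarrow> real^'n \<Rightarrow> real^'n \<Rightarrow> real^'m" where
  "push f x v = (\<Sum>j\<in>UNIV. v $ j *\<^sub>R zf f x j)"

definition wfun :: "(real^'m::finite \<Rightarrow> real^'m^'m) \<Rightarrow> (real^'m \<Rightarrow> real^'m) \<Rightarrow> (real^'n::finite \<Rightarrow> real^'m) \<Rightarrow> (real^'n \<Rightarrow> real^'m) \<Rightarrow> real^'n \<Rightarrow> real" where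
  "wfun g W f N y = g_inner g (f y) (N y) (W (f y))"

definition grad_h :: "(real^'m::finite \<Rightarrow> real^'m^'m) \<Rightarrow> (real^'n::finite \<Rightarrow> real^'m) \<Rightarrow> (real^'n \<Rightarrow> real) \<Rightarrow> real^'n \<Rightarrow> real^'n" where
  "grad_h g f \<phi> x = (\<chi> j. \<Sum>i\<in>UNIV. hinv g f x $ i $ j * pd i \<phi> x)"

definition normsq :: "(real^'k \<Rightarrow> real^'k^'k) \<Rightarrow> (real^'k \<Rightarrow> real^'k) \<Rightarrow> real^'k::finite \<Rightarrow> real" where
  "normsq g W q = g_inner g q (W q) (W q)"

definition dirderiv :: "(real^'k::finite \<Rightarrow> real) \<Rightarrow> real^'k \<Rightarrow> real^'k \<Rightarrow> real" where
  "dirderiv \<phi> p v = (\<Sum>a\<in>UNIV. v $ a * pd a \<phi> p)"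

end

(*
  A Killing field W has skew-adjoint covariant derivative, <nabla_u W, v> + <nabla_v W, u> = 0
  (Killing's equation plus the Koszul formula), and metric compatibility gives
  <nabla_N W, W> = N(|W|^2)/2.  At a point of the hypersurface every ambient vector splits
  orthogonally as df(tangent coordinates) + <N, .> N: the tensor B is the matrix of the tangential
  projection, delta - B that of the normal one, and A contracted with a covector gives the tangent
  coordinates.  The second fundamental form is normal (its tangential part cancels by the
  symmetry of the second derivatives of f), so each contraction in the statement becomes an inner
  product involving the tangential part T of W, with W = T + w N.
  The only substantial identity is the one for <tau(T,T), N>: differentiating <N, df> = 0,
  <N, N> = 1 and w = <N, W o f> expresses it through dw(T) and <nabla_T W, N>, and skew-adjointness
  turns the latter into -<nabla_N W, W> = -N(|W|^2)/2.
*)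

theory Submission
  imports Defs
begin

lemma sum_axis_scaleR:
  fixes F :: "'k::finite \<Rightarrow> 'b::real_vector"
  shows "(\<Sum>c\<in>UNIV. axis a (1::real) $ c *\<^sub>R F c) = F a"
proof -
  have "(\<Sum>c\<in>UNIV. axis a (1::real) $ c *\<^sub>R F c) = (\<Sum>c\<in>UNIV. if c = a then F c else 0)"
    by (rule sum.cong) (auto simp: axis_def)
  also have "\<dots> = F a" by simp
  finally show ?thesis .
qed

lemma sum_swap_inner: "(\<Sum>a\<in>A. \<Sum>b\<in>B. \<Sum>c\<in>C. F a b c) = (\<Sum>a\<in>A. \<Sum>c\<in>C. \<Sum>b\<in>B. F a b c)"
  by (rule sum.cong[OF refl]) (rule sum.swap)

lemma sum_reverse3: "(\<Sum>a\<in>A. \<Sum>b\<in>B. \<Sum>c\<in>C. F a b c) = (\<Sum>c\<in>C. \<Sum>b\<in>B. \<Sum>a\<in>A. F a b c)"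
proof -
  have "(\<Sum>a\<in>A. \<Sum>b\<in>B. \<Sum>c\<in>C. F a b c) = (\<Sum>a\<in>A. \<Sum>c\<in>C. \<Sum>b\<in>B. F a b c)"
    by (rule sum_swap_inner)
  also have "\<dots> = (\<Sum>c\<in>C. \<Sum>a\<in>A. \<Sum>b\<in>B. F a b c)" by (rule sum.swap)
  also have "\<dots> = (\<Sum>c\<in>C. \<Sum>b\<in>B. \<Sum>a\<in>A. F a b c)" by (rule sum_swap_inner)
  finally show ?thesis .
qed

lemma sum_swap_pairs:
  "(\<Sum>d\<in>A. \<Sum>t\<in>B. \<Sum>i\<in>C. \<Sum>j\<in>D. F d t i j) = (\<Sum>i\<in>C. \<Sum>j\<in>D. \<Sum>d\<in>A. \<Sum>t\<in>B. F d t i j)"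
proof -
  have "(\<Sum>d\<in>A. \<Sum>t\<in>B. \<Sum>i\<in>C. \<Sum>j\<in>D. F d t i j) = (\<Sum>d\<in>A. \<Sum>i\<in>C. \<Sum>t\<in>B. \<Sum>j\<in>D. F d t i j)"
    by (rule sum_swap_inner)
  also have "\<dots> = (\<Sum>d\<in>A. \<Sum>i\<in>C. \<Sum>j\<in>D. \<Sum>t\<in>B. F d t i j)"
    by (rule sum.cong[OF refl]) (rule sum_swap_inner)
  also have "\<dots> = (\<Sum>i\<in>C. \<Sum>d\<in>A. \<Sum>j\<in>D. \<Sum>t\<in>B. F d t i j)"
    by (rule sum.swap)
  also have "\<dots> = (\<Sum>i\<in>C. \<Sum>j\<in>D. \<Sum>d\<in>A. \<Sum>t\<in>B. F d t i j)"
    by (rule sum_swap_inner)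
  finally show ?thesis .
qed

lemma sum_product3:
  "(\<Sum>d\<in>D. \<Sum>t\<in>T. \<Sum>a\<in>A. p d * q t * r a) = (\<Sum>d\<in>D. p d) * (\<Sum>t\<in>T. q t) * (\<Sum>a\<in>A. (r a :: real))"
proof -
  have "(\<Sum>d\<in>D. p d) * (\<Sum>t\<in>T. q t) * (\<Sum>a\<in>A. r a) = (\<Sum>d\<in>D. \<Sum>t\<in>T. p d * q t) * (\<Sum>a\<in>A. r a)"
    by (simp add: sum_product)
  also have "\<dots> = (\<Sum>d\<in>D. \<Sum>t\<in>T. p d * q t * (\<Sum>a\<in>A. r a))"
    by (simp only: sum_distrib_right)
  also have "\<dots> = (\<Sum>d\<in>D. \<Sum>t\<in>T. \<Sum>a\<in>A. p d * q t * r a)"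
    by (simp only: sum_distrib_left)
  finally show ?thesis by simp
qed

section \<open>Coordinate partial derivatives\<close>

lemma pd_eq_derivative:
  assumes "(F has_derivative D) (at y)"
  shows "pd i F y = D (axis i 1)"
proof -
  have "((\<lambda>t::real. y + t *\<^sub>R axis i 1) has_derivative (\<lambda>t. t *\<^sub>R axis i 1)) (at 0)"
    by (auto intro!: derivative_eq_intros)
  from has_derivative_compose[OF this, of F D] assms
  have "((\<lambda>t. F (y + t *\<^sub>R axis i 1)) has_derivative (\<lambda>t. D (t *\<^sub>R axis i 1))) (at 0)"
    by (simp add: o_def)
  then have "((\<lambda>t. F (y + t *\<^sub>R axis i 1)) has_vector_derivative D (axis i 1)) (at 0)"
    unfolding has_vector_derivative_def
    using linear_scale[OF has_derivative_linear[OF assms]] by simp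
  then show ?thesis unfolding pd_def by (rule vector_derivative_at)
qed

lemma has_derivative_pd:
  assumes "F differentiable (at y)"
  shows "(F has_derivative (\<lambda>v. \<Sum>c\<in>UNIV. v $ c *\<^sub>R pd c F y)) (at (y::real^'k))"
proof -
  obtain D where D: "(F has_derivative D) (at y)" using assms differentiable_def by blast
  have "D v = (\<Sum>c\<in>UNIV. v $ c *\<^sub>R pd c F y)" for v
  proof -
    have "D v = D (\<Sum>c\<in>UNIV. v $ c *\<^sub>R axis c 1)"
      using basis_expansion[of v] by (simp add: scalar_mult_eq_scaleR)
    then show ?thesis using has_derivative_linear[OF D]
      by (simp add: linear_sum linear_scale pd_eq_derivative[OF D])
  qed
  then have "D = (\<lambda>v. \<Sum>c\<in>UNIV. v $ c *\<^sub>R pd c F y)" by (simp add: fun_eq_iff)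
  with D show ?thesis by simp
qed

lemma differentiable_component:
  "F differentiable (at y) \<Longrightarrow> (\<lambda>y. F y $ a) differentiable (at y)"
  unfolding differentiable_def using bounded_linear.has_derivative[OF bounded_linear_vec_nth] by blast

lemma pd_component:
  assumes "F differentiable (at y)"
  shows "pd i (\<lambda>y. F y $ a) y = pd i F y $ a"
proof -
  obtain D where D: "(F has_derivative D) (at y)" using assms differentiable_def by blast
  have "((\<lambda>y. F y $ a) has_derivative (\<lambda>v. D v $ a)) (at y)"
    using bounded_linear.has_derivative[OF bounded_linear_vec_nth D] .
  then show ?thesis using pd_eq_derivative D by metis
qed

lemma pd_id: "pd i (\<lambda>q. q) y = axis i 1"
  using pd_eq_derivative[OF has_derivative_ident] .

lemma pd_mult:
  fixes \<phi> \<psi> :: "real^'k \<Rightarrow> real"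
  assumes "\<phi> differentiable (at y)" "\<psi> differentiable (at y)"
  shows "pd i (\<lambda>y. \<phi> y * \<psi> y) y = pd i \<phi> y * \<psi> y + \<phi> y * pd i \<psi> y"
proof -
  obtain D where D: "(\<phi> has_derivative D) (at y)" using assms differentiable_def by blast
  obtain E where E: "(\<psi> has_derivative E) (at y)" using assms differentiable_def by blast
  show ?thesis
    using pd_eq_derivative[OF has_derivative_mult[OF D E]] pd_eq_derivative[OF D] pd_eq_derivative[OF E]
    by simp
qed

lemma pd_sum:
  assumes "finite A" "\<And>a. a \<in> A \<Longrightarrow> \<phi> a differentiable (at y)"
  shows "pd i (\<lambda>y. \<Sum>a\<in>A. \<phi> a y) y = (\<Sum>a\<in>A. pd i (\<phi> a) y)"
proof -
  obtain D where D: "\<And>a. a \<in> A \<Longrightarrow> (\<phi> a has_derivative D a) (at y)"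
    using assms(2) unfolding differentiable_def by metis
  have "((\<lambda>y. \<Sum>a\<in>A. \<phi> a y) has_derivative (\<lambda>v. \<Sum>a\<in>A. D a v)) (at y)"
    using has_derivative_sum[of A \<phi> D] D by blast
  then have "pd i (\<lambda>y. \<Sum>a\<in>A. \<phi> a y) y = (\<Sum>a\<in>A. D a (axis i 1))"
    by (rule pd_eq_derivative)
  also have "\<dots> = (\<Sum>a\<in>A. pd i (\<phi> a) y)"
    by (intro sum.cong refl) (simp add: pd_eq_derivative[OF D])
  finally show ?thesis .
qed

lemma pd_compose:
  fixes f :: "real^'n \<Rightarrow> real^'m" and F :: "real^'m \<Rightarrow> 'b::real_normed_vector"
  assumes "F differentiable (at (f y))" "f differentiable (at y)"
  shows "pd i (\<lambda>y. F (f y)) y = (\<Sum>c\<in>UNIV. pd i f y $ c *\<^sub>R pd c F (f y))"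
proof -
  obtain D where D: "(f has_derivative D) (at y)" using assms differentiable_def by blast
  have "((\<lambda>y. F (f y)) has_derivative (\<lambda>v. \<Sum>c\<in>UNIV. D v $ c *\<^sub>R pd c F (f y))) (at y)"
    using has_derivative_compose[OF D has_derivative_pd[OF assms(1)]] by (simp add: o_def)
  then show ?thesis using pd_eq_derivative[OF D] by (simp add: pd_eq_derivative)
qed

lemma pd_cong_on:
  assumes "open U" "y \<in> U" "\<And>z. z \<in> U \<Longrightarrow> \<phi> z = \<psi> z"
  shows "pd i \<phi> y = pd i \<psi> y"
proof -
  obtain e where e: "e > 0" "ball y e \<subseteq> U" using assms(1,2) open_contains_ball by blast
  have "eventually (\<lambda>t. y + t *\<^sub>R axis i 1 \<in> U) (nhds 0)"
    unfolding eventually_nhds_metric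
  proof (intro exI[of _ e] conjI allI impI)
    fix t :: real assume "dist t 0 < e"
    then have "dist y (y + t *\<^sub>R axis i 1) < e" by (simp add: dist_norm)
    then show "y + t *\<^sub>R axis i 1 \<in> U" using e by auto
  qed (use e in auto)
  then have "eventually (\<lambda>t. t \<in> UNIV \<longrightarrow> \<phi> (y + t *\<^sub>R axis i 1) = \<psi> (y + t *\<^sub>R axis i 1)) (nhds 0)"
    by (rule eventually_mono) (simp add: assms(3))
  then show ?thesis unfolding pd_def by (rule vector_derivative_cong_eq) simp_all
qed

lemma pd_const_on:
  assumes "open U" "y \<in> U" "\<And>z. z \<in> U \<Longrightarrow> \<phi> z = k"
  shows "pd i \<phi> y = 0"
  using pd_cong_on[OF assms] pd_eq_derivative[OF has_derivative_const] by simp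

lemma has_real_derivative_along_axis:
  fixes \<phi> :: "real^'k \<Rightarrow> real"
  assumes "\<phi> differentiable (at (a + t *\<^sub>R axis i 1))"
  shows "((\<lambda>t. \<phi> (a + t *\<^sub>R axis i 1)) has_real_derivative pd i \<phi> (a + t *\<^sub>R axis i 1)) (at t)"
proof -
  obtain D where D: "(\<phi> has_derivative D) (at (a + t *\<^sub>R axis i 1))"
    using assms differentiable_def by blast
  have "((\<lambda>t::real. a + t *\<^sub>R axis i 1) has_derivative (\<lambda>h. h *\<^sub>R axis i 1)) (at t)"
    by (auto intro!: derivative_eq_intros)
  from has_derivative_compose[OF this D]
  have "((\<lambda>t. \<phi> (a + t *\<^sub>R axis i 1)) has_derivative (\<lambda>h. D (h *\<^sub>R axis i 1))) (at t)"
    by (simp add: o_def)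
  moreover have "(\<lambda>h. D (h *\<^sub>R axis i 1)) = (\<lambda>h. pd i \<phi> (a + t *\<^sub>R axis i 1) * h)"
    using linear_scale[OF has_derivative_linear[OF D]] pd_eq_derivative[OF D]
    by (auto simp: mult.commute)
  ultimately show ?thesis unfolding has_field_derivative_def by simp
qed

lemma second_difference_mvt:
  fixes \<phi> :: "real^'k \<Rightarrow> real"
  assumes s: "s > 0"
    and sq: "\<And>\<sigma> \<tau>. 0 \<le> \<sigma> \<Longrightarrow> \<sigma> \<le> s \<Longrightarrow> 0 \<le> \<tau> \<Longrightarrow> \<tau> \<le> s \<Longrightarrow> x + \<sigma> *\<^sub>R axis i 1 + \<tau> *\<^sub>R axis j 1 \<in> U"
    and d0: "\<And>y. y \<in> U \<Longrightarrow> \<phi> differentiable (at y)"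
    and di: "\<And>y. y \<in> U \<Longrightarrow> pd i \<phi> differentiable (at y)"
  shows "\<exists>\<sigma> \<tau>. 0 < \<sigma> \<and> \<sigma> < s \<and> 0 < \<tau> \<and> \<tau> < s \<and>
     \<phi> (x + s *\<^sub>R axis i 1 + s *\<^sub>R axis j 1) - \<phi> (x + s *\<^sub>R axis i 1) - \<phi> (x + s *\<^sub>R axis j 1) + \<phi> x
       = s * s * pd j (pd i \<phi>) (x + \<sigma> *\<^sub>R axis i 1 + \<tau> *\<^sub>R axis j 1)"
proof -
  define ei ej where "ei = axis i (1::real)" and "ej = axis j (1::real)"
  define u where "u \<sigma> = \<phi> ((x + s *\<^sub>R ej) + \<sigma> *\<^sub>R ei) - \<phi> (x + \<sigma> *\<^sub>R ei)" for \<sigma>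
  have "\<exists>z. 0 < z \<and> z < s \<and> u s - u 0 = (s - 0) *
      (pd i \<phi> ((x + s *\<^sub>R ej) + z *\<^sub>R ei) - pd i \<phi> (x + z *\<^sub>R ei))"
  proof (rule MVT2)
    fix \<sigma> assume h: "0 \<le> \<sigma>" "\<sigma> \<le> s"
    have m1: "(x + s *\<^sub>R ej) + \<sigma> *\<^sub>R ei \<in> U" using sq[OF h, of s] s
      by (simp add: ei_def ej_def algebra_simps)
    have m2: "x + \<sigma> *\<^sub>R ei \<in> U" using sq[OF h, of 0] s by (simp add: ei_def ej_def)
    show "DERIV u \<sigma> :> pd i \<phi> ((x + s *\<^sub>R ej) + \<sigma> *\<^sub>R ei) - pd i \<phi> (x + \<sigma> *\<^sub>R ei)"
      unfolding u_def ei_def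
      by (intro DERIV_diff has_real_derivative_along_axis d0) (use m1 m2 in \<open>simp_all add: ei_def\<close>)
  qed (use s in auto)
  then obtain \<sigma> where \<sigma>: "0 < \<sigma>" "\<sigma> < s" and eq1: "u s - u 0 = s *
      (pd i \<phi> ((x + \<sigma> *\<^sub>R ei) + s *\<^sub>R ej) - pd i \<phi> ((x + \<sigma> *\<^sub>R ei) + 0 *\<^sub>R ej))"
    by (auto simp: algebra_simps)
  define v where "v \<tau> = pd i \<phi> ((x + \<sigma> *\<^sub>R ei) + \<tau> *\<^sub>R ej)" for \<tau>
  have "\<exists>z. 0 < z \<and> z < s \<and> v s - v 0 = (s - 0) * pd j (pd i \<phi>) ((x + \<sigma> *\<^sub>R ei) + z *\<^sub>R ej)"
  proof (rule MVT2)
    fix \<tau> assume h: "0 \<le> \<tau>" "\<tau> \<le> s"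
    have m: "(x + \<sigma> *\<^sub>R ei) + \<tau> *\<^sub>R ej \<in> U" using sq[OF _ _ h, of \<sigma>] \<sigma>
      by (simp add: ei_def ej_def)
    show "DERIV v \<tau> :> pd j (pd i \<phi>) ((x + \<sigma> *\<^sub>R ei) + \<tau> *\<^sub>R ej)"
      unfolding v_def ej_def
      by (intro has_real_derivative_along_axis di) (use m in \<open>simp add: ej_def\<close>)
  qed (use s in auto)
  then obtain \<tau> where \<tau>: "0 < \<tau>" "\<tau> < s" and eq2: "v s - v 0 = s * pd j (pd i \<phi>) ((x + \<sigma> *\<^sub>R ei) + \<tau> *\<^sub>R ej)"
    by auto
  have "\<phi> (x + s *\<^sub>R ei + s *\<^sub>R ej) - \<phi> (x + s *\<^sub>R ei) - \<phi> (x + s *\<^sub>R ej) + \<phi> x = u s - u 0"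
    by (simp add: u_def algebra_simps)
  also have "\<dots> = s * (v s - v 0)" using eq1 by (simp add: v_def)
  also have "\<dots> = s * s * pd j (pd i \<phi>) (x + \<sigma> *\<^sub>R ei + \<tau> *\<^sub>R ej)" using eq2 by simp
  finally show ?thesis using \<sigma> \<tau> unfolding ei_def ej_def by blast
qed

lemma dist_axis_square_le:
  fixes x :: "real^'k"
  assumes "0 \<le> \<sigma>" "0 \<le> \<tau>"
  shows "dist (x + \<sigma> *\<^sub>R axis k 1 + \<tau> *\<^sub>R axis l 1) x \<le> \<sigma> + \<tau>"
proof -
  have "dist (x + \<sigma> *\<^sub>R axis k 1 + \<tau> *\<^sub>R axis l 1) x = norm (\<sigma> *\<^sub>R axis k 1 + \<tau> *\<^sub>R axis l (1::real))"
    by (simp add: dist_norm)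
  also have "\<dots> \<le> norm (\<sigma> *\<^sub>R axis k (1::real)) + norm (\<tau> *\<^sub>R axis l (1::real))"
    by (rule norm_triangle_ineq)
  finally show ?thesis using assms by simp
qed

lemma pd_pd_commute:
  fixes \<phi> :: "real^'k \<Rightarrow> real"
  assumes U: "open U" "x \<in> U"
    and d0: "\<And>y. y \<in> U \<Longrightarrow> \<phi> differentiable (at y)"
    and di: "\<And>y. y \<in> U \<Longrightarrow> pd i \<phi> differentiable (at y)"
    and dj: "\<And>y. y \<in> U \<Longrightarrow> pd j \<phi> differentiable (at y)"
    and ci: "isCont (pd j (pd i \<phi>)) x" and cj: "isCont (pd i (pd j \<phi>)) x"
  shows "pd j (pd i \<phi>) x = pd i (pd j \<phi>) x"
proof (rule ccontr)
  define A B where "A = pd j (pd i \<phi>) x" and "B = pd i (pd j \<phi>) x"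
  assume "pd j (pd i \<phi>) x \<noteq> pd i (pd j \<phi>) x"
  then have e: "\<bar>A - B\<bar> / 3 > 0" by (simp add: A_def B_def)
  obtain d1 where d1: "d1 > 0" "\<And>y. dist y x < d1 \<Longrightarrow> dist (pd j (pd i \<phi>) y) A < \<bar>A - B\<bar> / 3"
    using ci e unfolding continuous_at_eps_delta A_def by blast
  obtain d2 where d2: "d2 > 0" "\<And>y. dist y x < d2 \<Longrightarrow> dist (pd i (pd j \<phi>) y) B < \<bar>A - B\<bar> / 3"
    using cj e unfolding continuous_at_eps_delta B_def by blast
  obtain d3 where d3: "d3 > 0" "ball x d3 \<subseteq> U" using U open_contains_ball by blast
  define s where "s = min d1 (min d2 d3) / 3"
  have s: "s > 0" using d1 d2 d3 by (simp add: s_def)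
  have close: "dist (x + \<sigma> *\<^sub>R axis k 1 + \<tau> *\<^sub>R axis l 1) x < min d1 (min d2 d3)"
    if "0 \<le> \<sigma>" "\<sigma> \<le> s" "0 \<le> \<tau>" "\<tau> \<le> s" for \<sigma> \<tau> :: real and k l
    using dist_axis_square_le[of \<sigma> \<tau> x k l] that s by (simp add: s_def)
  have inU: "x + \<sigma> *\<^sub>R axis k 1 + \<tau> *\<^sub>R axis l 1 \<in> U"
    if "0 \<le> \<sigma>" "\<sigma> \<le> s" "0 \<le> \<tau>" "\<tau> \<le> s" for \<sigma> \<tau> :: real and k l
    using close[OF that, of k l] d3 by (auto simp: dist_commute)
  obtain \<sigma>1 \<tau>1 where st1: "0 < \<sigma>1" "\<sigma>1 < s" "0 < \<tau>1" "\<tau>1 < s" and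
    eq1: "\<phi> (x + s *\<^sub>R axis i 1 + s *\<^sub>R axis j 1) - \<phi> (x + s *\<^sub>R axis i 1) - \<phi> (x + s *\<^sub>R axis j 1) + \<phi> x
       = s * s * pd j (pd i \<phi>) (x + \<sigma>1 *\<^sub>R axis i 1 + \<tau>1 *\<^sub>R axis j 1)"
    using second_difference_mvt[where i=i and j=j, OF s inU d0 di] by blast
  obtain \<sigma>2 \<tau>2 where st2: "0 < \<sigma>2" "\<sigma>2 < s" "0 < \<tau>2" "\<tau>2 < s" and
    eq2: "\<phi> (x + s *\<^sub>R axis j 1 + s *\<^sub>R axis i 1) - \<phi> (x + s *\<^sub>R axis j 1) - \<phi> (x + s *\<^sub>R axis i 1) + \<phi> x
       = s * s * pd i (pd j \<phi>) (x + \<sigma>2 *\<^sub>R axis j 1 + \<tau>2 *\<^sub>R axis i 1)"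
    using second_difference_mvt[where i=j and j=i, OF s inU d0 dj] by blast
  have eq: "pd j (pd i \<phi>) (x + \<sigma>1 *\<^sub>R axis i 1 + \<tau>1 *\<^sub>R axis j 1)
      = pd i (pd j \<phi>) (x + \<sigma>2 *\<^sub>R axis j 1 + \<tau>2 *\<^sub>R axis i 1)"
    using eq1 eq2 s by (simp add: algebra_simps)
  have "dist (pd j (pd i \<phi>) (x + \<sigma>1 *\<^sub>R axis i 1 + \<tau>1 *\<^sub>R axis j 1)) A < \<bar>A - B\<bar> / 3"
    using d1(2) close[of \<sigma>1 \<tau>1 i j] st1 by force
  moreover have "dist (pd i (pd j \<phi>) (x + \<sigma>2 *\<^sub>R axis j 1 + \<tau>2 *\<^sub>R axis i 1)) B < \<bar>A - B\<bar> / 3"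
    using d2(2) close[of \<sigma>2 \<tau>2 j i] st2 by force
  ultimately show False using eq by (simp add: dist_real_def abs_if split: if_splits)
qed

section \<open>Bilinear forms and Christoffel symbols\<close>

lemma g_inner_eq_inner: "g_inner g p u v = u \<bullet> (g p *v v)"
  by (simp add: g_inner_def inner_vec_def matrix_vector_mult_def sum_distrib_left mult_ac)

lemma sum_mult_lower: "(\<Sum>a\<in>UNIV. v $ a * lower g p u $ a) = g_inner g p v u"
  by (simp add: g_inner_eq_inner lower_def inner_vec_def matrix_vector_mult_def)

lemma g_inner_add_left: "g_inner g p (u + v) w = g_inner g p u w + g_inner g p v w"
  and g_inner_add_right: "g_inner g p w (u + v) = g_inner g p w u + g_inner g p w v"
  and g_inner_diff_left: "g_inner g p (u - v) w = g_inner g p u w - g_inner g p v w"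
  and g_inner_scaleR_left: "g_inner g p (c *\<^sub>R u) w = c * g_inner g p u w"
  and g_inner_scaleR_right: "g_inner g p w (c *\<^sub>R u) = c * g_inner g p w u"
  and g_inner_zero_right: "g_inner g p w 0 = 0"
  by (simp_all add: g_inner_eq_inner algebra_simps matrix_vector_right_distrib
      matrix_vector_mult_diff_distrib matrix_vector_mult_scaleR)

lemma g_inner_sum_left: "g_inner g p (\<Sum>k\<in>A. u k) w = (\<Sum>k\<in>A. g_inner g p (u k) w)"
  by (simp add: g_inner_eq_inner inner_sum_left)

lemma g_inner_sum_right: "g_inner g p w (\<Sum>k\<in>A. u k) = (\<Sum>k\<in>A. g_inner g p w (u k))"
proof -
  have "g p *v (\<Sum>k\<in>A. u k) = (\<Sum>k\<in>A. g p *v u k)"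
    using linear_sum[OF matrix_vector_mul_linear[of "g p"]] by simp
  then show ?thesis by (simp add: g_inner_eq_inner inner_sum_right)
qed

lemma invertible_if_positive_definite:
  fixes A :: "real^'n^'n"
  assumes "\<And>u. u \<noteq> 0 \<Longrightarrow> u \<bullet> (A *v u) > 0"
  shows "invertible A"
  unfolding invertible_left_inverse matrix_left_invertible_ker
  using assms by (metis inner_zero_right less_irrefl)

lemma matrix_inv_right: "invertible A \<Longrightarrow> A ** matrix_inv A = mat 1"
  and matrix_inv_left: "invertible A \<Longrightarrow> matrix_inv A ** A = mat 1"
  using someI_ex[of "\<lambda>A'. A ** A' = mat 1 \<and> A' ** A = mat 1"]
  unfolding matrix_inv_def invertible_def by blast+

lemma matrix_inv_symmetric:
  fixes A :: "real^'n^'n"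
  assumes "invertible A" "transpose A = A"
  shows "matrix_inv A $ i $ j = matrix_inv A $ j $ i"
proof -
  have "transpose (matrix_inv A) ** A = mat 1"
    using arg_cong[OF matrix_inv_right[OF assms(1)], of transpose]
    by (simp add: matrix_transpose_mul assms(2))
  then have "transpose (matrix_inv A) = transpose (matrix_inv A) ** (A ** matrix_inv A)"
    using matrix_inv_right[OF assms(1)] by simp
  also have "\<dots> = matrix_inv A" by (simp add: matrix_mul_assoc \<open>transpose (matrix_inv A) ** A = mat 1\<close>)
  finally have "transpose (matrix_inv A) $ j $ i = matrix_inv A $ j $ i" by simp
  then show ?thesis by (simp add: transpose_def)
qed

lemma christoffel_lowered:
  assumes "invertible (g p)"
  shows "(\<Sum>c\<in>UNIV. g p $ a $ c * christoffel g p c b d)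
    = (pd b (\<lambda>q. g q $ a $ d) p + pd d (\<lambda>q. g q $ a $ b) p - pd a (\<lambda>q. g q $ b $ d) p) / 2"
proof -
  define T where "T e = pd b (\<lambda>q. g q $ e $ d) p + pd d (\<lambda>q. g q $ e $ b) p - pd e (\<lambda>q. g q $ b $ d) p" for e
  have "(\<Sum>c\<in>UNIV. g p $ a $ c * christoffel g p c b d)
      = (\<Sum>c\<in>UNIV. \<Sum>e\<in>UNIV. g p $ a $ c * matrix_inv (g p) $ c $ e * T e) / 2"
    by (simp add: christoffel_def T_def sum_distrib_left sum_divide_distrib mult_ac)
  also have "\<dots> = (\<Sum>e\<in>UNIV. (g p ** matrix_inv (g p)) $ a $ e * T e) / 2"
    by (subst sum.swap) (simp add: matrix_matrix_mult_def sum_distrib_right)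
  also have "\<dots> = T a / 2"
    by (simp add: matrix_inv_right[OF assms] mat_def if_distrib[of "\<lambda>x. x * _"] cong: if_cong)
  finally show ?thesis by (simp add: T_def)
qed

section \<open>A Killing field at a point\<close>

locale killing_point =
  fixes V :: "(real^'m::finite) set" and g :: "real^'m \<Rightarrow> real^'m^'m"
    and W :: "real^'m \<Rightarrow> real^'m" and p :: "real^'m"
  assumes metric: "riemannian_metric_on V g" and killing: "killing_on V g W" and pV: "p \<in> V"
begin

abbreviation gi :: "real^'m \<Rightarrow> real^'m \<Rightarrow> real" where "gi \<equiv> g_inner g p"

lemma openV: "open V"
  using metric by (simp add: riemannian_metric_on_def)

lemma g_symmetric: "q \<in> V \<Longrightarrow> g q $ a $ b = g q $ b $ a"
  using metric by (simp add: riemannian_metric_on_def)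

lemma gi_commute: "gi u v = gi v u"
  unfolding g_inner_def by (subst sum.swap) (simp add: g_symmetric[OF pV] mult_ac)

lemma gi_pos: "u \<noteq> 0 \<Longrightarrow> gi u u > 0"
  using metric pV by (simp add: riemannian_metric_on_def)

lemma g_invertible: "invertible (g p)"
  by (rule invertible_if_positive_definite) (metis gi_pos g_inner_eq_inner)

lemma g_differentiable: "q \<in> V \<Longrightarrow> g differentiable (at q)"
  using metric unfolding riemannian_metric_on_def Csmooth_on_def
  by (metis iter_pd.simps(1) differentiable_on_eq_differentiable_at)

lemma W_differentiable: "q \<in> V \<Longrightarrow> W differentiable (at q)"
  using killing metric unfolding killing_on_def riemannian_metric_on_def Csmooth_on_def
  by (metis iter_pd.simps(1) differentiable_on_eq_differentiable_at)

lemma g_entry_differentiable: "q \<in> V \<Longrightarrow> (\<lambda>q. g q $ a $ b) differentiable (at q)"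
  using differentiable_component[OF differentiable_component[OF g_differentiable]] .

definition Dg :: "real^'m \<Rightarrow> real^'m \<Rightarrow> real^'m \<Rightarrow> real" where
  "Dg u v w = (\<Sum>c\<in>UNIV. \<Sum>a\<in>UNIV. \<Sum>b\<in>UNIV. u $ c * v $ a * w $ b * pd c (\<lambda>q. g q $ a $ b) p)"

definition Gam :: "real^'m \<Rightarrow> real^'m \<Rightarrow> real^'m" where
  "Gam u v = (\<chi> a. \<Sum>t\<in>UNIV. \<Sum>d\<in>UNIV. christoffel g p a t d * u $ t * v $ d)"

definition dW :: "real^'m \<Rightarrow> real^'m" where
  "dW u = (\<Sum>c\<in>UNIV. u $ c *\<^sub>R pd c W p)"

lemma Dg_commute: "Dg u v w = Dg u w v"
proof -
  have "pd c (\<lambda>q. g q $ a $ b) p = pd c (\<lambda>q. g q $ b $ a) p" for c a b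
    by (rule pd_cong_on[OF openV pV]) (simp add: g_symmetric)
  then show ?thesis unfolding Dg_def by (subst sum_swap_inner) (simp add: mult_ac)
qed

lemma Dg_sum_left: "Dg (\<Sum>k\<in>A. c k *\<^sub>R u k) v w = (\<Sum>k\<in>A. c k * Dg (u k) v w)"
  and Dg_sum_middle: "Dg v (\<Sum>k\<in>A. c k *\<^sub>R u k) w = (\<Sum>k\<in>A. c k * Dg v (u k) w)"
  and Dg_sum_right: "Dg v w (\<Sum>k\<in>A. c k *\<^sub>R u k) = (\<Sum>k\<in>A. c k * Dg v w (u k))"
  by (simp_all add: Dg_def sum_component sum_distrib_left sum_distrib_right mult_ac sum.swap[of _ A])

lemma Dg_add_left: "Dg (u + u') v w = Dg u v w + Dg u' v w"
  and Dg_add_right: "Dg v w (u + u') = Dg v w u + Dg v w u'"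
  and Dg_scaleR_left: "Dg (r *\<^sub>R u) v w = r * Dg u v w"
  and Dg_scaleR_right: "Dg v w (r *\<^sub>R u) = r * Dg v w u"
  by (simp_all add: Dg_def algebra_simps sum.distrib sum_distrib_left)

lemma Dg_eq_sum:
  "Dg u v w = (\<Sum>a\<in>UNIV. \<Sum>b\<in>UNIV. (\<Sum>c\<in>UNIV. u $ c * pd c (\<lambda>q. g q $ a $ b) p) * v $ a * w $ b)"
proof -
  have "Dg u v w = (\<Sum>a\<in>UNIV. \<Sum>c\<in>UNIV. \<Sum>b\<in>UNIV. u $ c * v $ a * w $ b * pd c (\<lambda>q. g q $ a $ b) p)"
    unfolding Dg_def by (rule sum.swap)
  also have "\<dots> = (\<Sum>a\<in>UNIV. \<Sum>b\<in>UNIV. \<Sum>c\<in>UNIV. u $ c * v $ a * w $ b * pd c (\<lambda>q. g q $ a $ b) p)"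
    by (rule sum_swap_inner)
  finally show ?thesis by (simp add: sum_distrib_left sum_distrib_right mult_ac)
qed

lemma gi_eq_sum_g_mult: "gi u v = (\<Sum>b\<in>UNIV. v $ b * (g p *v u) $ b)"
  by (subst gi_commute) (simp add: g_inner_eq_inner inner_vec_def)

lemma g_mult_Gam:
  "(g p *v Gam u v) $ b = (\<Sum>t\<in>UNIV. \<Sum>d\<in>UNIV. u $ t * v $ d *
     ((pd t (\<lambda>q. g q $ b $ d) p + pd d (\<lambda>q. g q $ b $ t) p - pd b (\<lambda>q. g q $ t $ d) p) / 2))"
proof -
  have "(g p *v Gam u v) $ b
      = (\<Sum>a\<in>UNIV. \<Sum>t\<in>UNIV. \<Sum>d\<in>UNIV. u $ t * v $ d * (g p $ b $ a * christoffel g p a t d))"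
    by (simp add: matrix_vector_mult_def Gam_def sum_distrib_left mult_ac)
  also have "\<dots> = (\<Sum>t\<in>UNIV. \<Sum>d\<in>UNIV. u $ t * v $ d * (\<Sum>a\<in>UNIV. g p $ b $ a * christoffel g p a t d))"
    by (subst sum.swap, subst sum_swap_inner) (simp add: sum_distrib_left)
  finally show ?thesis by (simp add: christoffel_lowered[where g=g and p=p, OF g_invertible])
qed

lemma Koszul_formula: "gi (Gam u v) y = (Dg u y v + Dg v y u - Dg y u v) / 2"
proof -
  define F where "F b t d = y $ b * u $ t * v $ d" for b t d
  define dg where "dg c a b = pd c (\<lambda>q. g q $ a $ b) p" for c a b
  have "gi (Gam u v) y
      = (\<Sum>b\<in>UNIV. \<Sum>t\<in>UNIV. \<Sum>d\<in>UNIV. F b t d * ((dg t b d + dg d b t - dg b t d) / 2))"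
    by (simp add: gi_eq_sum_g_mult g_mult_Gam F_def dg_def sum_distrib_left mult_ac)
  also have "\<dots>
      = (\<Sum>b\<in>UNIV. \<Sum>t\<in>UNIV. \<Sum>d\<in>UNIV. F b t d * dg t b d / 2 + F b t d * dg d b t / 2 - F b t d * dg b t d / 2)"
    by (intro sum.cong refl) (simp add: field_simps)
  also have "\<dots> = (\<Sum>b\<in>UNIV. \<Sum>t\<in>UNIV. \<Sum>d\<in>UNIV. F b t d * dg t b d) / 2
      + (\<Sum>b\<in>UNIV. \<Sum>t\<in>UNIV. \<Sum>d\<in>UNIV. F b t d * dg d b t) / 2
      - (\<Sum>b\<in>UNIV. \<Sum>t\<in>UNIV. \<Sum>d\<in>UNIV. F b t d * dg b t d) / 2"
    by (simp only: sum.distrib sum_subtractf sum_divide_distrib)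
  also have "(\<Sum>b\<in>UNIV. \<Sum>t\<in>UNIV. \<Sum>d\<in>UNIV. F b t d * dg t b d) = Dg u y v"
    unfolding Dg_def by (subst sum.swap) (simp add: F_def dg_def mult_ac)
  also have "(\<Sum>b\<in>UNIV. \<Sum>t\<in>UNIV. \<Sum>d\<in>UNIV. F b t d * dg d b t) = Dg v y u"
    unfolding Dg_def by (subst sum_swap_inner, subst sum.swap) (simp add: F_def dg_def mult_ac)
  also have "(\<Sum>b\<in>UNIV. \<Sum>t\<in>UNIV. \<Sum>d\<in>UNIV. F b t d * dg b t d) = Dg y u v"
    by (simp add: Dg_def F_def dg_def mult_ac)
  finally show ?thesis by (simp add: field_simps)
qed


lemma covd_along_eq: "covd_along g W p u = dW u + Gam u (W p)"
proof -
  have "pd e (\<lambda>q. W q $ b) p = pd e W p $ b" for e b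
    by (rule pd_component[OF W_differentiable[OF pV]])
  then show ?thesis
    by (simp add: vec_eq_iff covd_along_def cov_deriv_def dW_def Gam_def sum_component
        distrib_left sum.distrib sum_distrib_left mult_ac)
qed

lemma killing_equation: "Dg (W p) u v + gi (dW u) v + gi u (dW v) = 0"
proof -
  define dWc where "dWc a c = pd a (\<lambda>q. W q $ c) p" for a c
  have dW_comp: "dW u $ c = (\<Sum>a\<in>UNIV. u $ a * dWc a c)" for u c
    using pd_component[OF W_differentiable[OF pV]] by (simp add: dW_def dWc_def sum_component)
  have K: "(\<Sum>c\<in>UNIV. W p $ c * pd c (\<lambda>q. g q $ a $ b) p + g p $ c $ b * dWc a c
      + g p $ a $ c * dWc b c) = 0" for a b
    using killing pV unfolding killing_on_def dWc_def by (simp add: sum.distrib)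
  have "Dg (W p) u v = (\<Sum>a\<in>UNIV. \<Sum>b\<in>UNIV. u $ a * v $ b * (\<Sum>c\<in>UNIV. W p $ c * pd c (\<lambda>q. g q $ a $ b) p))"
    unfolding Dg_def by (subst sum.swap, subst sum_swap_inner) (simp add: sum_distrib_left mult_ac)
  moreover have "gi (dW u) v = (\<Sum>a\<in>UNIV. \<Sum>b\<in>UNIV. u $ a * v $ b * (\<Sum>c\<in>UNIV. g p $ c $ b * dWc a c))"
  proof -
    have "gi (dW u) v = (\<Sum>c\<in>UNIV. \<Sum>b\<in>UNIV. \<Sum>a\<in>UNIV. u $ a * v $ b * (g p $ c $ b * dWc a c))"
      by (simp add: g_inner_def dW_comp sum_distrib_left sum_distrib_right mult_ac)
    also have "\<dots> = (\<Sum>a\<in>UNIV. \<Sum>b\<in>UNIV. \<Sum>c\<in>UNIV. u $ a * v $ b * (g p $ c $ b * dWc a c))"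
      by (rule sum_reverse3)
    finally show ?thesis by (simp add: sum_distrib_left)
  qed
  moreover have "gi u (dW v) = (\<Sum>a\<in>UNIV. \<Sum>b\<in>UNIV. u $ a * v $ b * (\<Sum>c\<in>UNIV. g p $ a $ c * dWc b c))"
  proof -
    have "gi u (dW v) = (\<Sum>a\<in>UNIV. \<Sum>c\<in>UNIV. \<Sum>b\<in>UNIV. u $ a * v $ b * (g p $ a $ c * dWc b c))"
      by (simp add: g_inner_def dW_comp sum_distrib_left sum_distrib_right mult_ac)
    also have "\<dots> = (\<Sum>a\<in>UNIV. \<Sum>b\<in>UNIV. \<Sum>c\<in>UNIV. u $ a * v $ b * (g p $ a $ c * dWc b c))"
      by (rule sum_swap_inner)
    finally show ?thesis by (simp add: sum_distrib_left)
  qed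
  ultimately show ?thesis
    by (simp add: sum.distrib[symmetric] distrib_left[symmetric] K)
qed

lemma covd_skew: "gi (covd_along g W p u) v + gi (covd_along g W p v) u = 0"
proof -
  have "gi (covd_along g W p u) v + gi (covd_along g W p v) u
      = Dg (W p) u v + gi (dW u) v + gi u (dW v)"
    using Dg_commute[of "W p" u v] Dg_commute[of u v "W p"] Dg_commute[of v u "W p"]
    by (simp add: covd_along_eq g_inner_add_left Koszul_formula gi_commute[of "dW v"] field_simps)
  then show ?thesis by (simp add: killing_equation)
qed

lemma pd_g_inner:
  fixes F A B :: "real^'k::finite \<Rightarrow> real^'m"
  assumes "F y = p" "F differentiable (at y)" "A differentiable (at y)" "B differentiable (at y)"
  shows "pd i (\<lambda>y. g_inner g (F y) (A y) (B y)) y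
     = Dg (pd i F y) (A y) (B y) + gi (pd i A y) (B y) + gi (A y) (pd i B y)"
proof -
  have dg: "(\<lambda>y. g (F y) $ a $ b) differentiable (at y)" for a b
  proof -
    have "(\<lambda>q. g q $ a $ b) differentiable (at (F y))" using g_entry_differentiable[OF pV] assms(1) by simp
    from differentiable_compose[OF this assms(2)] show ?thesis .
  qed
  have pd_gF: "pd i (\<lambda>y. g (F y) $ a $ b) y = (\<Sum>c\<in>UNIV. pd i F y $ c * pd c (\<lambda>q. g q $ a $ b) p)" for a b
    using pd_compose[OF _ assms(2), of "\<lambda>q. g q $ a $ b"] g_entry_differentiable[OF pV] assms(1) by simp
  note d = dg differentiable_component[OF assms(3)] differentiable_component[OF assms(4)]
  have "pd i (\<lambda>y. g_inner g (F y) (A y) (B y)) y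
      = (\<Sum>a\<in>UNIV. \<Sum>b\<in>UNIV. pd i (\<lambda>y. g (F y) $ a $ b * A y $ a * B y $ b) y)"
    unfolding g_inner_def by (simp add: pd_sum d)
  also have "\<dots> = (\<Sum>a\<in>UNIV. \<Sum>b\<in>UNIV. (\<Sum>c\<in>UNIV. pd i F y $ c * pd c (\<lambda>q. g q $ a $ b) p) * A y $ a * B y $ b
      + g p $ a $ b * pd i A y $ a * B y $ b + g p $ a $ b * A y $ a * pd i B y $ b)"
    by (simp add: pd_mult d pd_gF pd_component assms algebra_simps)
  also have "\<dots> = Dg (pd i F y) (A y) (B y) + gi (pd i A y) (B y) + gi (A y) (pd i B y)"
    by (simp add: Dg_eq_sum g_inner_def sum.distrib)
  finally show ?thesis .
qed

lemma dirderiv_normsq: "dirderiv (normsq g W) p u = 2 * gi (covd_along g W p u) (W p)"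
proof -
  have normsq: "normsq g W = (\<lambda>q. g_inner g q (W q) (W q))" by (simp add: fun_eq_iff normsq_def)
  have pd_normsq: "pd a (normsq g W) p = Dg (axis a 1) (W p) (W p) + 2 * gi (pd a W p) (W p)" for a
    using pd_g_inner[of "\<lambda>q. q" p W W a] W_differentiable[OF pV] gi_commute[of "W p"]
    by (simp add: normsq pd_id)
  have Dg_axis: "(\<Sum>a\<in>UNIV. u $ a * Dg (axis a 1) v w) = Dg u v w" for v w
    using Dg_sum_left[where c="\<lambda>a. u $ a" and u="\<lambda>a. axis a 1" and A=UNIV]
      basis_expansion[of u] by (simp add: scalar_mult_eq_scaleR)
  have gi_dW: "(\<Sum>a\<in>UNIV. u $ a * (2 * gi (pd a W p) (W p))) = 2 * gi (dW u) (W p)"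
    by (simp add: dW_def g_inner_sum_left g_inner_scaleR_left sum_distrib_left mult.left_commute)
  have "dirderiv (normsq g W) p u = Dg u (W p) (W p) + 2 * gi (dW u) (W p)"
    unfolding dirderiv_def pd_normsq distrib_left sum.distrib Dg_axis gi_dW ..
  then show ?thesis
    using Dg_commute[of "W p" u "W p"]
    by (simp add: covd_along_eq g_inner_add_left Koszul_formula field_simps)
qed

end

section \<open>A hypersurface through the point\<close>

locale hypersurface_point = killing_point V g W "f x"
  for V :: "(real^'m::finite) set" and g W and f :: "real^'n::finite \<Rightarrow> real^'m" and x +
  fixes U :: "(real^'n) set" and N :: "real^'n \<Rightarrow> real^'m"
  assumes dim: "CARD('m) = CARD('n) + 1"
    and imm: "immersion_on U f"
    and normal: "unit_normal_on U g f N" and xU: "x \<in> U"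
begin

abbreviation z :: "'n \<Rightarrow> real^'m" where "z \<equiv> zf f x"
abbreviation df :: "real^'n \<Rightarrow> real^'m" where "df \<equiv> push f x"
abbreviation hm :: "real^'n^'n" where "hm \<equiv> induced_metric g f x"
abbreviation hi :: "real^'n^'n" where "hi \<equiv> hinv g f x"
abbreviation Nx :: "real^'m" where "Nx \<equiv> N x"
abbreviation Wp :: "real^'m" where "Wp \<equiv> W (f x)"

lemma openU: "open U"
  using imm by (simp add: immersion_on_def)

lemma df_eq_0_imp: "df c = 0 \<Longrightarrow> c = 0"
  using imm xU by (simp add: immersion_on_def push_def)

lemma N_unit: "gi Nx Nx = 1" and N_orthogonal: "gi Nx (z i) = 0"
  using normal xU by (simp_all add: unit_normal_on_def)

lemma gi_N_df: "gi Nx (df c) = 0"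
  using N_orthogonal by (simp add: push_def g_inner_sum_right g_inner_scaleR_right)

lemma induced_metric_eq: "hm $ i $ j = gi (z i) (z j)"
  by (simp add: induced_metric_def g_inner_def)

lemma gi_df_df: "gi (df a) (df b) = a \<bullet> (hm *v b)"
  by (simp add: push_def g_inner_sum_left g_inner_sum_right g_inner_scaleR_left g_inner_scaleR_right
      inner_vec_def matrix_vector_mult_def induced_metric_eq sum_distrib_left mult_ac, subst sum.swap, simp)

lemma induced_metric_invertible: "invertible hm"
proof (rule invertible_if_positive_definite)
  fix u :: "real^'n" assume "u \<noteq> 0"
  then have "df u \<noteq> 0" using df_eq_0_imp by blast
  then show "u \<bullet> (hm *v u) > 0" using gi_pos gi_df_df by metis
qed

lemma hi_hm: "hi ** hm = mat 1"
  using matrix_inv_left[OF induced_metric_invertible] by (simp add: hinv_def)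

lemma hi_symmetric: "hi $ i $ j = hi $ j $ i"
proof -
  have "transpose hm = hm"
    by (simp add: transpose_def vec_eq_iff induced_metric_eq gi_commute)
  then show ?thesis
    using matrix_inv_symmetric[OF induced_metric_invertible] by (simp add: hinv_def)
qed

text \<open>The frame \<open>z\<close> and \<open>N\<close> consist of \<open>CARD('n) + 1\<close> independent vectors, so they span.\<close>
lemma tangent_normal_span: "\<exists>a b. v = df a + b *\<^sub>R Nx"
proof -
  define B where "B = insert Nx (range z)"
  have z_inj: "inj z"
  proof (rule injI)
    fix i j assume "z i = z j"
    then have "df (axis i 1 - axis j 1) = 0"
      by (simp add: push_def scaleR_diff_left sum_subtractf sum_axis_scaleR)
    then have "axis i 1 - axis j (1::real) = 0" by (rule df_eq_0_imp)
    then show "i = j" by (simp add: axis_eq_axis)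
  qed
  have N_notin: "Nx \<notin> range z"
  proof
    assume "Nx \<in> range z"
    then obtain i where "Nx = z i" by auto
    then show False using N_unit N_orthogonal[of i] by simp
  qed
  have sumB: "(\<Sum>w\<in>B. u w *\<^sub>R w) = df (\<chi> k. u (z k)) + u Nx *\<^sub>R Nx" for u
    using N_notin z_inj by (simp add: B_def sum.reindex push_def)
  have "independent B"
  proof
    assume "dependent B"
    then obtain u where u: "\<exists>v\<in>B. u v \<noteq> 0" "(\<Sum>v\<in>B. u v *\<^sub>R v) = 0"
      using dependent_finite[of B] by (auto simp: B_def)
    have "u Nx = gi Nx (\<Sum>v\<in>B. u v *\<^sub>R v)"
      by (simp add: sumB g_inner_add_right g_inner_scaleR_right gi_N_df N_unit)
    then have uN: "u Nx = 0" using u(2) by (simp add: g_inner_zero_right)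
    then have "(\<chi> k. u (z k)) = 0" using u(2) sumB df_eq_0_imp by simp
    with uN u(1) show False by (auto simp: B_def vec_eq_iff)
  qed
  moreover have "card B = CARD('n) + 1"
    using N_notin z_inj by (simp add: B_def card_image)
  ultimately have "UNIV \<subseteq> span B"
    by (intro card_ge_dim_independent) (use dim in auto)
  then obtain u where "v = (\<Sum>w\<in>B. u w *\<^sub>R w)"
    using span_finite[of B] by (auto simp: B_def)
  then show ?thesis using sumB by blast
qed

definition tangent_coords :: "real^'m \<Rightarrow> real^'n" where
  "tangent_coords v = (\<chi> j. \<Sum>i\<in>UNIV. hi $ i $ j * gi (z i) v)"

lemma orthogonal_decomposition: "v = df (tangent_coords v) + gi Nx v *\<^sub>R Nx"
proof -
  obtain a b where v: "v = df a + b *\<^sub>R Nx" using tangent_normal_span by blast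
  have "gi (z i) (df a) = (hm *v a) $ i" for i
    by (simp add: push_def g_inner_sum_right g_inner_scaleR_right matrix_vector_mult_def
        induced_metric_eq mult.commute)
  moreover have "gi (z i) Nx = 0" for i using N_orthogonal gi_commute by metis
  ultimately have "gi (z i) v = (hm *v a) $ i" for i
    by (simp add: v g_inner_add_right g_inner_scaleR_right)
  then have "tangent_coords v = hi *v (hm *v a)"
    by (simp add: tangent_coords_def vec_eq_iff matrix_vector_mult_def hi_symmetric)
  also have "\<dots> = a" by (simp add: matrix_vector_mul_assoc hi_hm)
  finally show ?thesis
    using v by (simp add: g_inner_add_right g_inner_scaleR_right gi_N_df N_unit)
qed


lemma f_differentiable: "y \<in> U \<Longrightarrow> f differentiable (at y)"
  and z_differentiable: "y \<in> U \<Longrightarrow> pd j f differentiable (at y)"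
  and zz_differentiable: "y \<in> U \<Longrightarrow> pd i (pd j f) differentiable (at y)"
proof -
  assume y: "y \<in> U"
  have "iter_pd is f differentiable (at y)" for "is"
    using imm y openU unfolding immersion_on_def Csmooth_on_def
    by (simp add: differentiable_on_eq_differentiable_at)
  from this[of "[]"] this[of "[j]"] this[of "[i, j]"]
  show "f differentiable (at y)" "pd j f differentiable (at y)" "pd i (pd j f) differentiable (at y)"
    by simp_all
qed

lemma N_differentiable: "N differentiable (at x)"
  using normal openU xU unfolding unit_normal_on_def Csmooth_on_def
  by (metis iter_pd.simps(1) differentiable_on_eq_differentiable_at)

lemma W_f_differentiable: "(\<lambda>y. W (f y)) differentiable (at x)"
  using differentiable_compose[OF W_differentiable[OF pV] f_differentiable[OF xU]] .

lemma pd_g_inner_along_f: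
  assumes "A differentiable (at x)" "B differentiable (at x)"
  shows "pd i (\<lambda>y. g_inner g (f y) (A y) (B y)) x
     = Dg (z i) (A x) (B x) + gi (pd i A x) (B x) + gi (A x) (pd i B x)"
  by (rule pd_g_inner[OF refl f_differentiable[OF xU] assms])

definition S :: "'n \<Rightarrow> 'n \<Rightarrow> real^'m" where
  "S i j = pd i (\<lambda>y. zf f y j) x"

lemma pd_z_component: "pd i (\<lambda>y. zf f y j $ a) x = S i j $ a"
  unfolding S_def by (rule pd_component[OF z_differentiable[OF xU]])

lemma S_commute: "S i j = S j i"
proof -
  have "S i j $ a = S j i $ a" for a
  proof -
    define \<phi> where "\<phi> y = f y $ a" for y
    have z_eq: "zf f y k $ a = pd k \<phi> y" if "y \<in> U" for y k
      unfolding \<phi>_def using pd_component[OF f_differentiable[OF that]] by simp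
    have S_eq: "S k l $ a = pd k (pd l \<phi>) x" for k l
      unfolding pd_z_component[symmetric] by (rule pd_cong_on[OF openU xU]) (simp add: z_eq)
    have d0: "\<phi> differentiable (at y)" if "y \<in> U" for y
      unfolding \<phi>_def by (rule differentiable_component[OF f_differentiable[OF that]])
    have dk: "pd k \<phi> differentiable (at y)" if "y \<in> U" for y k
      using differentiable_component[OF z_differentiable[OF that, of k], of a] openU that z_eq
        has_derivative_transform_within_open unfolding differentiable_def by blast
    have ck: "isCont (pd l (pd k \<phi>)) x" for k l
    proof -
      have c: "isCont (\<lambda>q. pd l (pd k f) q $ a) x"
        using differentiable_imp_continuous_within[OF differentiable_component[OF zz_differentiable[OF xU]]]
        by blast
      have "eventually (\<lambda>q. pd l (pd k \<phi>) q = pd l (pd k f) q $ a) (nhds x)"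
        unfolding eventually_nhds
      proof (intro exI conjI ballI)
        fix q assume q: "q \<in> U"
        have "pd l (pd k \<phi>) q = pd l (\<lambda>y. pd k f y $ a) q"
          by (rule pd_cong_on[OF openU q]) (simp add: z_eq)
        then show "pd l (pd k \<phi>) q = pd l (pd k f) q $ a"
          by (simp add: pd_component[OF z_differentiable[OF q]])
      qed (use openU xU in auto)
      from isCont_cong[OF this] c show ?thesis by simp
    qed
    show ?thesis using S_eq pd_pd_commute[OF openU xU d0 dk dk ck ck] by simp
  qed
  then show ?thesis by (simp add: vec_eq_iff)
qed


lemma pd_induced_metric:
  "pd i (\<lambda>q. induced_metric g f q $ m $ j) x = Dg (z i) (z m) (z j) + gi (S i m) (z j) + gi (z m) (S i j)"
proof -
  have "(\<lambda>q. induced_metric g f q $ m $ j) = (\<lambda>q. g_inner g (f q) (pd m f q) (pd j f q))"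
    by (simp add: fun_eq_iff induced_metric_def g_inner_def)
  then show ?thesis
    using pd_g_inner_along_f[OF z_differentiable[OF xU] z_differentiable[OF xU]] by (simp add: S_def)
qed

lemma induced_christoffel_lowered:
  "gi (\<Sum>k\<in>UNIV. christoffel (induced_metric g f) x k i j *\<^sub>R z k) (z l)
   = (pd i (\<lambda>q. induced_metric g f q $ l $ j) x + pd j (\<lambda>q. induced_metric g f q $ l $ i) x
      - pd l (\<lambda>q. induced_metric g f q $ i $ j) x) / 2"
proof -
  have "gi (\<Sum>k\<in>UNIV. christoffel (induced_metric g f) x k i j *\<^sub>R z k) (z l)
      = (\<Sum>k\<in>UNIV. hm $ l $ k * christoffel (induced_metric g f) x k i j)"
    by (simp add: g_inner_sum_left g_inner_scaleR_left induced_metric_eq gi_commute[of "z l"] mult_ac)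
  then show ?thesis
    by (simp add: christoffel_lowered[where g="induced_metric g f" and p=x, OF induced_metric_invertible])
qed

definition tau :: "'n \<Rightarrow> 'n \<Rightarrow> real^'m" where
  "tau i j = (\<chi> a. sff g f x a i j)"

lemma tau_eq:
  "tau i j = S i j + Gam (z j) (z i) - (\<Sum>k\<in>UNIV. christoffel (induced_metric g f) x k i j *\<^sub>R z k)"
  by (simp add: vec_eq_iff tau_def sff_def pd_z_component Gam_def sum_component mult_ac)

text \<open>The first-order terms cancel by the Koszul formula for \<open>g\<close> and for the induced metric,
  the second-order ones by the symmetry of \<open>S\<close>.\<close>
lemma tau_tangential: "gi (tau i j) (z l) = 0"
proof -
  have "Dg (z l) (z i) (z j) = Dg (z l) (z j) (z i)" by (rule Dg_commute)
  moreover have "gi (S l i) (z j) = gi (S i l) (z j)" "gi (z l) (S j i) = gi (S i j) (z l)"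
    "gi (z l) (S i j) = gi (S i j) (z l)" "gi (z i) (S l j) = gi (S j l) (z i)"
    by (simp_all add: S_commute gi_commute)
  ultimately show ?thesis
    by (simp add: tau_eq g_inner_add_left g_inner_diff_left induced_christoffel_lowered
        pd_induced_metric Koszul_formula field_simps)
qed

lemma gi_tau: "gi (tau i j) v = gi Nx v * gi (tau i j) Nx"
proof -
  have "gi (tau i j) (df c) = 0" for c
    by (simp add: push_def g_inner_sum_right g_inner_scaleR_right tau_tangential)
  then show ?thesis
    by (subst orthogonal_decomposition[of v]) (simp add: g_inner_add_right g_inner_scaleR_right)
qed

lemma gi_tau_N: "gi (tau i j) Nx = gi (S i j) Nx + gi (Gam (z j) (z i)) Nx"
  by (simp add: tau_eq g_inner_add_left g_inner_diff_left g_inner_sum_left g_inner_scaleR_left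
      gi_commute[of "z _" Nx] N_orthogonal)


lemma pd_N_z: "Dg (z i) Nx (z k) + gi (pd i N x) (z k) + gi Nx (S i k) = 0"
proof -
  have "pd i (\<lambda>y. g_inner g (f y) (N y) (pd k f y)) x = 0"
    by (rule pd_const_on[OF openU xU]) (use normal in \<open>simp add: unit_normal_on_def\<close>)
  then show ?thesis
    using pd_g_inner_along_f[OF N_differentiable z_differentiable[OF xU, of k], of i] by (simp add: S_def)
qed

lemma pd_N_N: "Dg (z i) Nx Nx + 2 * gi (pd i N x) Nx = 0"
proof -
  have "pd i (\<lambda>y. g_inner g (f y) (N y) (N y)) x = 0"
    by (rule pd_const_on[OF openU xU]) (use normal in \<open>simp add: unit_normal_on_def\<close>)
  then show ?thesis
    using pd_g_inner_along_f[OF N_differentiable N_differentiable, of i] by (simp add: gi_commute[of Nx])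
qed

lemma pd_wfun: "pd i (wfun g W f N) x = Dg (z i) Nx Wp + gi (pd i N x) Wp + gi Nx (dW (z i))"
proof -
  have "pd i (\<lambda>y. W (f y)) x = dW (z i)"
    unfolding dW_def by (rule pd_compose[OF W_differentiable[OF pV] f_differentiable[OF xU]])
  moreover have "wfun g W f N = (\<lambda>y. g_inner g (f y) (N y) (W (f y)))"
    by (simp add: fun_eq_iff wfun_def)
  ultimately show ?thesis using pd_g_inner_along_f[OF N_differentiable W_f_differentiable, of i] by simp
qed

definition dN :: "real^'n \<Rightarrow> real^'m" where
  "dN c = (\<Sum>i\<in>UNIV. c $ i *\<^sub>R pd i N x)"

lemma dN_N: "gi (dN c) Nx = - Dg (df c) Nx Nx / 2"
proof -
  have "gi (pd i N x) Nx = - Dg (z i) Nx Nx / 2" for i using pd_N_N[of i] by linarith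
  then show ?thesis
    by (simp add: dN_def push_def g_inner_sum_left g_inner_scaleR_left Dg_sum_left sum_divide_distrib sum_negf)
qed

lemma dirderiv_wfun:
  "(\<Sum>i\<in>UNIV. c $ i * pd i (wfun g W f N) x) = Dg (df c) Nx Wp + gi (dN c) Wp + gi Nx (dW (df c))"
  by (simp add: pd_wfun dN_def push_def dW_def distrib_left sum.distrib Dg_sum_left g_inner_sum_left
      g_inner_sum_right g_inner_scaleR_left g_inner_scaleR_right scaleR_sum_right sum_distrib_left
      sum_component mult_ac sum.swap[of _ "UNIV :: 'n set"])

lemma Dg_df_left_right: "Dg (df a) v (df b) = (\<Sum>i\<in>UNIV. \<Sum>j\<in>UNIV. a $ i * b $ j * Dg (z i) v (z j))"
  by (simp only: push_def Dg_sum_left) (simp add: Dg_sum_right sum_distrib_left mult_ac)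

lemma Dg_df_middle_right: "Dg v (df a) (df b) = (\<Sum>i\<in>UNIV. \<Sum>j\<in>UNIV. a $ i * b $ j * Dg v (z i) (z j))"
  by (simp only: push_def Dg_sum_middle) (simp add: Dg_sum_right sum_distrib_left mult_ac)

lemma tau_N_quadratic:
  "(\<Sum>i\<in>UNIV. \<Sum>j\<in>UNIV. c $ i * c $ j * gi (tau i j) Nx) = - gi (dN c) (df c) - Dg Nx (df c) (df c) / 2"
proof -
  have S_N: "gi (S i j) Nx = - Dg (z i) Nx (z j) - gi (pd i N x) (z j)" for i j
    using pd_N_z[of i j] gi_commute[of Nx "S i j"] by linarith
  have dN_df: "gi (dN c) (df c) = (\<Sum>i\<in>UNIV. \<Sum>j\<in>UNIV. c $ i * c $ j * gi (pd i N x) (z j))"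
    by (simp only: dN_def g_inner_sum_left)
      (simp add: push_def g_inner_sum_right g_inner_scaleR_left g_inner_scaleR_right sum_distrib_left mult_ac)
  have "(\<Sum>i\<in>UNIV. \<Sum>j\<in>UNIV. c $ i * c $ j * gi (S i j) Nx) = - Dg (df c) Nx (df c) - gi (dN c) (df c)"
    unfolding S_N Dg_df_left_right dN_df by (simp add: right_diff_distrib sum_subtractf sum_negf)
  moreover have "(\<Sum>i\<in>UNIV. \<Sum>j\<in>UNIV. c $ i * c $ j * gi (Gam (z j) (z i)) Nx)
      = (Dg (df c) Nx (df c) + Dg (df c) Nx (df c) - Dg Nx (df c) (df c)) / 2"
  proof -
    have "(\<Sum>i\<in>UNIV. \<Sum>j\<in>UNIV. c $ i * c $ j * gi (Gam (z j) (z i)) Nx)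
        = (\<Sum>i\<in>UNIV. \<Sum>j\<in>UNIV. c $ i * c $ j * Dg (z j) Nx (z i)) / 2
          + (\<Sum>i\<in>UNIV. \<Sum>j\<in>UNIV. c $ i * c $ j * Dg (z i) Nx (z j)) / 2
          - (\<Sum>i\<in>UNIV. \<Sum>j\<in>UNIV. c $ i * c $ j * Dg Nx (z i) (z j)) / 2"
    proof -
      have "gi (Gam (z j) (z i)) Nx = Dg (z j) Nx (z i) / 2 + Dg (z i) Nx (z j) / 2 - Dg Nx (z i) (z j) / 2"
        for i j
        using Dg_commute[of Nx "z j" "z i"] by (simp add: Koszul_formula field_simps)
      then show ?thesis
        by (simp add: right_diff_distrib distrib_left sum.distrib sum_subtractf sum_divide_distrib)
    qed
    also have "(\<Sum>i\<in>UNIV. \<Sum>j\<in>UNIV. c $ i * c $ j * Dg (z j) Nx (z i))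
        = (\<Sum>i\<in>UNIV. \<Sum>j\<in>UNIV. c $ i * c $ j * Dg (z i) Nx (z j))"
      by (subst sum.swap) (simp add: mult_ac)
    finally show ?thesis
      unfolding Dg_df_left_right Dg_df_middle_right by (simp add: add_divide_distrib diff_divide_distrib)
  qed
  ultimately show ?thesis
    by (simp add: gi_tau_N distrib_left sum.distrib field_simps)
qed


lemma covd_tangent_W_N:
  "gi (covd_along g W (f x) (df (tangent_coords Wp))) Nx = - dirderiv (normsq g W) (f x) Nx / 2"
proof -
  let ?T = "df (tangent_coords Wp)"
  have "gi (covd_along g W (f x) Nx) Nx = 0" using covd_skew[of Nx Nx] by simp
  then have "gi (covd_along g W (f x) Nx) ?T = gi (covd_along g W (f x) Nx) Wp"
    by (subst (2) orthogonal_decomposition) (simp add: g_inner_add_right g_inner_scaleR_right)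
  then show ?thesis
    using covd_skew[of ?T Nx] by (simp add: dirderiv_normsq)
qed

lemma covd_tangent_W_W:
  "gi (covd_along g W (f x) (df (tangent_coords Wp))) Wp = - dirderiv (normsq g W) (f x) Nx / 2 * gi Nx Wp"
proof -
  let ?T = "df (tangent_coords Wp)"
  have "gi (covd_along g W (f x) ?T) ?T = 0" using covd_skew[of ?T ?T] by simp
  then show ?thesis
    by (subst (2) orthogonal_decomposition)
      (simp add: g_inner_add_right g_inner_scaleR_right covd_tangent_W_N)
qed

text \<open>The second derivatives of \<open>f\<close> and the derivative of \<open>N\<close> are traded for derivatives of
  \<open>w\<close> and of \<open>g\<close>; everything except the Killing term cancels after writing \<open>W = T + w N\<close>.\<close>
lemma tau_N_tangent_W:
  "(\<Sum>i\<in>UNIV. \<Sum>j\<in>UNIV. tangent_coords Wp $ i * tangent_coords Wp $ j * gi (tau i j) Nx)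
   = - ((\<Sum>i\<in>UNIV. tangent_coords Wp $ i * pd i (wfun g W f N) x) + dirderiv (normsq g W) (f x) Nx / 2)"
proof -
  define c where "c = tangent_coords Wp"
  define T where "T = df c"
  define w where "w = gi Nx Wp"
  define NW where "NW = dirderiv (normsq g W) (f x) Nx"
  have W_eq: "Wp = T + w *\<^sub>R Nx"
    unfolding T_def c_def w_def by (rule orthogonal_decomposition)
  have dN_W: "gi (dN c) Wp = gi (dN c) T - w / 2 * Dg T Nx Nx"
    by (simp add: W_eq g_inner_add_right g_inner_scaleR_right dN_N T_def)
  have "gi Nx (dW T) + (Dg T Nx Wp + Dg Wp Nx T - Dg Nx T Wp) / 2 = - NW / 2"
    using covd_tangent_W_N gi_commute[of Nx]
    by (simp add: NW_def T_def c_def covd_along_eq g_inner_add_left Koszul_formula)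
  moreover have "Dg T Nx Wp = Dg T Nx T + w * Dg T Nx Nx" "Dg Wp Nx T = Dg T Nx T + w * Dg Nx Nx T"
    "Dg Nx T Wp = Dg Nx T T + w * Dg Nx T Nx" "Dg Nx Nx T = Dg Nx T Nx"
    by (simp_all add: W_eq Dg_add_left Dg_add_right Dg_scaleR_left Dg_scaleR_right Dg_commute[of Nx Nx])
  ultimately show ?thesis
    using tau_N_quadratic[of c] dirderiv_wfun[of c] dN_W
    by (simp add: c_def[symmetric] T_def[symmetric] NW_def[symmetric] field_simps)
qed


lemma sum_lower_mult: "(\<Sum>a\<in>UNIV. lower g (f x) u $ a * v $ a) = gi u v"
  using sum_mult_lower[of v g "f x" u] gi_commute[of v] by (simp add: mult.commute)

lemma tang_field_eq: "tang_field g W f x = tangent_coords Wp"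
proof -
  have "(\<Sum>a\<in>UNIV. hi $ i $ j * lower g (f x) Wp $ a * z i $ a) = hi $ i $ j * gi (z i) Wp" for i j
  proof -
    have "(\<Sum>a\<in>UNIV. hi $ i $ j * lower g (f x) Wp $ a * z i $ a)
       = hi $ i $ j * (\<Sum>a\<in>UNIV. z i $ a * lower g (f x) Wp $ a)" by (simp add: sum_distrib_left mult_ac)
    then show ?thesis by (simp only: sum_mult_lower)
  qed
  then show ?thesis by (simp add: tang_field_def tangent_coords_def vec_eq_iff)
qed

lemma Bup_contract_lower: "(\<Sum>b\<in>UNIV. Bup g f x e b * lower g (f x) v $ b) = df (tangent_coords v) $ e"
proof -
  have "(\<Sum>b\<in>UNIV. Bup g f x e b * lower g (f x) v $ b)
      = (\<Sum>i\<in>UNIV. \<Sum>j\<in>UNIV. hi $ i $ j * z i $ e * (\<Sum>b\<in>UNIV. lower g (f x) v $ b * z j $ b))"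
    by (simp add: Bup_def sum_distrib_left sum_distrib_right mult_ac sum.swap[of _ "UNIV :: 'm set"])
  also have "\<dots> = (\<Sum>i\<in>UNIV. \<Sum>j\<in>UNIV. hi $ j $ i * z i $ e * gi (z j) v)"
    by (simp only: sum_lower_mult gi_commute[of _ "z _"] hi_symmetric[of _ "_"])
  also have "\<dots> = df (tangent_coords v) $ e"
    by (simp add: push_def tangent_coords_def sum_component sum_distrib_left mult_ac)
  finally show ?thesis .
qed

lemma Bmix_contract: "(\<Sum>c\<in>UNIV. Bmix g f x t c * X $ c) = df (tangent_coords X) $ t"
proof -
  have "(\<Sum>c\<in>UNIV. Bmix g f x t c * X $ c) = (\<Sum>c\<in>UNIV. \<Sum>d\<in>UNIV. Bup g f x t d * (g (f x) $ d $ c * X $ c))"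
    by (simp add: Bmix_def sum_distrib_left sum_distrib_right mult_ac)
  also have "\<dots> = (\<Sum>d\<in>UNIV. \<Sum>c\<in>UNIV. Bup g f x t d * (g (f x) $ d $ c * X $ c))"
    by (rule sum.swap)
  also have "\<dots> = (\<Sum>d\<in>UNIV. Bup g f x t d * lower g (f x) X $ d)"
    by (simp add: lower_def sum_distrib_left)
  finally show ?thesis by (simp add: Bup_contract_lower)
qed

lemma normal_projection_contract:
  "(\<Sum>c\<in>UNIV. (kdelta a c - Bmix g f x a c) * X $ c) = (gi Nx X *\<^sub>R Nx) $ a"
proof -
  have "(\<Sum>c\<in>UNIV. kdelta a c * X $ c) = (\<Sum>c\<in>UNIV. if a = c then X $ c else 0)"
    by (rule sum.cong) (auto simp: kdelta_def)
  then have "(\<Sum>c\<in>UNIV. (kdelta a c - Bmix g f x a c) * X $ c) = X $ a - df (tangent_coords X) $ a"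
    by (simp add: left_diff_distrib sum_subtractf Bmix_contract)
  also have "\<dots> = (gi Nx X *\<^sub>R Nx) $ a"
    using arg_cong[OF orthogonal_decomposition[of X], of "\<lambda>v. v $ a"] by simp
  finally show ?thesis .
qed

lemma Acoef_contract_lower: "(\<Sum>d\<in>UNIV. lower g (f x) v $ d * Acoef g f x i d) = tangent_coords v $ i"
proof -
  have "(\<Sum>d\<in>UNIV. lower g (f x) v $ d * Acoef g f x i d)
     = (\<Sum>j\<in>UNIV. hi $ i $ j * (\<Sum>d\<in>UNIV. lower g (f x) v $ d * z j $ d))"
    by (simp add: Acoef_def sum_distrib_left mult_ac sum.swap[of _ "UNIV :: 'n set"])
  also have "\<dots> = (\<Sum>j\<in>UNIV. hi $ j $ i * gi (z j) v)"
    by (simp add: sum_lower_mult gi_commute[of _ "z _"] hi_symmetric)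
  finally show ?thesis by (simp add: tangent_coords_def)
qed

lemma gi_df_grad_h: "gi (df (grad_h g f \<phi> x)) v = (\<Sum>i\<in>UNIV. tangent_coords v $ i * pd i \<phi> x)"
proof -
  have "gi (df (grad_h g f \<phi> x)) v = (\<Sum>j\<in>UNIV. \<Sum>i\<in>UNIV. hi $ i $ j * pd i \<phi> x * gi (z j) v)"
    by (simp add: push_def grad_h_def g_inner_sum_left g_inner_scaleR_left sum_distrib_right)
  also have "\<dots> = (\<Sum>i\<in>UNIV. \<Sum>j\<in>UNIV. hi $ i $ j * pd i \<phi> x * gi (z j) v)"
    by (rule sum.swap)
  also have "\<dots> = (\<Sum>i\<in>UNIV. tangent_coords v $ i * pd i \<phi> x)"
  proof (rule sum.cong[OF refl])
    fix i
    have "tangent_coords v $ i = (\<Sum>j\<in>UNIV. hi $ i $ j * gi (z j) v)"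
      unfolding tangent_coords_def by (simp, intro sum.cong refl, simp add: hi_symmetric)
    then show "(\<Sum>j\<in>UNIV. hi $ i $ j * pd i \<phi> x * gi (z j) v) = tangent_coords v $ i * pd i \<phi> x"
      by (simp add: sum_distrib_left sum_distrib_right mult_ac)
  qed
  finally show ?thesis .
qed

lemma Bup_covd_contract:
  "(\<Sum>e\<in>UNIV. \<Sum>b\<in>UNIV. \<Sum>a\<in>UNIV. Bup g f x e b * lower g (f x) v $ b
      * lower g (f x) (\<chi> c. cov_deriv g W (f x) c e) $ a * y $ a)
   = gi (covd_along g W (f x) (df (tangent_coords v))) y"
proof -
  define Col where "Col e = (\<chi> c. cov_deriv g W (f x) c e)" for e
  have "(\<Sum>e\<in>UNIV. \<Sum>b\<in>UNIV. \<Sum>a\<in>UNIV. Bup g f x e b * lower g (f x) v $ b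
      * lower g (f x) (Col e) $ a * y $ a)
     = (\<Sum>e\<in>UNIV. (\<Sum>b\<in>UNIV. Bup g f x e b * lower g (f x) v $ b)
       * (\<Sum>a\<in>UNIV. lower g (f x) (Col e) $ a * y $ a))"
    by (simp add: sum_distrib_left sum_distrib_right mult_ac)
  also have "\<dots> = (\<Sum>e\<in>UNIV. df (tangent_coords v) $ e * gi (Col e) y)"
    by (simp only: Bup_contract_lower sum_lower_mult)
  also have "\<dots> = gi (covd_along g W (f x) (df (tangent_coords v))) y"
  proof -
    have "covd_along g W (f x) u = (\<Sum>e\<in>UNIV. u $ e *\<^sub>R Col e)" for u
      by (simp add: vec_eq_iff covd_along_def Col_def sum_component)
    then show ?thesis by (simp add: g_inner_sum_left g_inner_scaleR_left)
  qed
  finally show ?thesis by (simp add: Col_def)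
qed


lemma normal_part_contract:
  "(\<Sum>t\<in>UNIV. \<Sum>c\<in>UNIV. lower g (f x) v $ t * (kdelta t c - Bmix g f x t c) * X $ c) = gi Nx v * gi Nx X"
proof -
  have "(\<Sum>t\<in>UNIV. \<Sum>c\<in>UNIV. lower g (f x) v $ t * (kdelta t c - Bmix g f x t c) * X $ c)
     = (\<Sum>t\<in>UNIV. lower g (f x) v $ t * (\<Sum>c\<in>UNIV. (kdelta t c - Bmix g f x t c) * X $ c))"
    by (simp add: sum_distrib_left mult_ac)
  also have "\<dots> = (\<Sum>t\<in>UNIV. lower g (f x) v $ t * (gi Nx X *\<^sub>R Nx) $ t)"
    by (simp only: normal_projection_contract)
  also have "\<dots> = gi v (gi Nx X *\<^sub>R Nx)" by (rule sum_lower_mult)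
  finally show ?thesis by (simp add: g_inner_scaleR_right gi_commute[of v])
qed

lemma Bup_covd_normal_contract:
  "(\<Sum>e\<in>UNIV. \<Sum>b\<in>UNIV. \<Sum>a\<in>UNIV. \<Sum>c\<in>UNIV. Bup g f x e b * lower g (f x) v $ b
      * lower g (f x) (\<chi> d. cov_deriv g W (f x) d e) $ a * (kdelta a c - Bmix g f x a c) * X $ c)
   = gi (covd_along g W (f x) (df (tangent_coords v))) Nx * gi Nx X"
proof -
  have "(\<Sum>e\<in>UNIV. \<Sum>b\<in>UNIV. \<Sum>a\<in>UNIV. \<Sum>c\<in>UNIV. Bup g f x e b * lower g (f x) v $ b
      * lower g (f x) (\<chi> d. cov_deriv g W (f x) d e) $ a * (kdelta a c - Bmix g f x a c) * X $ c)
   = (\<Sum>e\<in>UNIV. \<Sum>b\<in>UNIV. \<Sum>a\<in>UNIV. Bup g f x e b * lower g (f x) v $ b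
      * lower g (f x) (\<chi> d. cov_deriv g W (f x) d e) $ a
      * (\<Sum>c\<in>UNIV. (kdelta a c - Bmix g f x a c) * X $ c))"
    by (simp add: sum_distrib_left mult_ac)
  also have "\<dots> = gi (covd_along g W (f x) (df (tangent_coords v))) (gi Nx X *\<^sub>R Nx)"
    by (simp only: normal_projection_contract Bup_covd_contract)
  finally show ?thesis by (simp only: g_inner_scaleR_right mult.commute)
qed

lemma mean_curvature_contract:
  assumes "\<forall>a. (\<Sum>i\<in>UNIV. \<Sum>j\<in>UNIV. hi $ i $ j * sff g f x a i j) = r * Nx $ a"
  shows "(\<Sum>i\<in>UNIV. \<Sum>j\<in>UNIV. \<Sum>a\<in>UNIV. hi $ i $ j * sff g f x a i j * lower g (f x) v $ a) = r * gi Nx v"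
proof -
  have "(\<Sum>i\<in>UNIV. \<Sum>j\<in>UNIV. \<Sum>a\<in>UNIV. hi $ i $ j * sff g f x a i j * lower g (f x) v $ a)
     = (\<Sum>i\<in>UNIV. \<Sum>a\<in>UNIV. \<Sum>j\<in>UNIV. hi $ i $ j * sff g f x a i j * lower g (f x) v $ a)"
    by (rule sum_swap_inner)
  also have "\<dots> = (\<Sum>a\<in>UNIV. \<Sum>i\<in>UNIV. \<Sum>j\<in>UNIV. hi $ i $ j * sff g f x a i j * lower g (f x) v $ a)"
    by (rule sum.swap)
  also have "\<dots> = (\<Sum>a\<in>UNIV. (\<Sum>i\<in>UNIV. \<Sum>j\<in>UNIV. hi $ i $ j * sff g f x a i j) * lower g (f x) v $ a)"
    by (simp add: sum_distrib_right)
  also have "\<dots> = r * gi Nx v"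
    using assms by (simp add: sum_mult_lower sum_distrib_left[symmetric] mult_ac)
  finally show ?thesis .
qed

lemma sff_tangent_W_contract:
  "(\<Sum>d\<in>UNIV. \<Sum>t\<in>UNIV. \<Sum>i\<in>UNIV. \<Sum>j\<in>UNIV. \<Sum>a\<in>UNIV.
      lower g (f x) Wp $ d * lower g (f x) Wp $ t * Acoef g f x i d * Acoef g f x j t * sff g f x a i j
      * lower g (f x) X $ a)
   = - (gi (df (grad_h g f (wfun g W f N) x)) Wp + dirderiv (normsq g W) (f x) Nx / 2) * gi Nx X"
proof -
  let ?Wl = "lower g (f x) Wp" and ?Xl = "lower g (f x) X"
  have factor: "(\<Sum>d\<in>UNIV. \<Sum>t\<in>UNIV. \<Sum>a\<in>UNIV.
      ?Wl $ d * ?Wl $ t * Acoef g f x i d * Acoef g f x j t * sff g f x a i j * ?Xl $ a)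
    = (\<Sum>d\<in>UNIV. ?Wl $ d * Acoef g f x i d) * (\<Sum>t\<in>UNIV. ?Wl $ t * Acoef g f x j t)
      * (\<Sum>a\<in>UNIV. tau i j $ a * ?Xl $ a)" for i j
  proof -
    have "(\<Sum>d\<in>UNIV. \<Sum>t\<in>UNIV. \<Sum>a\<in>UNIV.
        ?Wl $ d * ?Wl $ t * Acoef g f x i d * Acoef g f x j t * sff g f x a i j * ?Xl $ a)
      = (\<Sum>d\<in>UNIV. \<Sum>t\<in>UNIV. \<Sum>a\<in>UNIV. (?Wl $ d * Acoef g f x i d) * (?Wl $ t * Acoef g f x j t)
          * (tau i j $ a * ?Xl $ a))"
      by (simp add: tau_def mult_ac)
    then show ?thesis by (simp only: sum_product3)
  qed
  have "(\<Sum>d\<in>UNIV. \<Sum>t\<in>UNIV. \<Sum>i\<in>UNIV. \<Sum>j\<in>UNIV. \<Sum>a\<in>UNIV.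
      ?Wl $ d * ?Wl $ t * Acoef g f x i d * Acoef g f x j t * sff g f x a i j * ?Xl $ a)
    = (\<Sum>i\<in>UNIV. \<Sum>j\<in>UNIV. \<Sum>d\<in>UNIV. \<Sum>t\<in>UNIV. \<Sum>a\<in>UNIV.
      ?Wl $ d * ?Wl $ t * Acoef g f x i d * Acoef g f x j t * sff g f x a i j * ?Xl $ a)"
    by (rule sum_swap_pairs)
  also have "\<dots> = (\<Sum>i\<in>UNIV. \<Sum>j\<in>UNIV. tangent_coords Wp $ i * tangent_coords Wp $ j * (gi Nx X * gi (tau i j) Nx))"
    by (simp only: factor Acoef_contract_lower sum_mult_lower gi_tau[of _ _ X])
  also have "\<dots> = gi Nx X * (\<Sum>i\<in>UNIV. \<Sum>j\<in>UNIV. tangent_coords Wp $ i * tangent_coords Wp $ j * gi (tau i j) Nx)"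
    by (simp add: sum_distrib_left mult_ac)
  finally show ?thesis by (simp add: tau_N_tangent_W gi_df_grad_h)
qed

end

theorem lemma2p4:
  fixes U :: "(real^'n::finite) set" and V :: "(real^'m::finite) set"
    and f :: "real^'n \<Rightarrow> real^'m"
    and g :: "real^'m \<Rightarrow> real^'m^'m"
    and W :: "real^'m \<Rightarrow> real^'m"
    and N :: "real^'n \<Rightarrow> real^'m"
    and H :: "real^'n \<Rightarrow> real" and x :: "real^'n" and X :: "real^'m"
  assumes dim: "CARD('m) = CARD('n) + 1"
    and metric: "riemannian_metric_on V g"
    and imm: "immersion_on U f"
    and fUV: "f ` U \<subseteq> V"
    and killing: "killing_on V g W"
    and small: "\<forall>q\<in>V. normsq g W q < 1"
    and normal: "unit_normal_on U g f N"
    and meancurv: "\<forall>y\<in>U. \<forall>a. (\<Sum>i\<in>UNIV. \<Sum>j\<in>UNIV. hinv g f y $ i $ j * sff g f y a i j)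
                         = real CARD('n) * H y * N y $ a"
    and xU: "x \<in> U"
  shows
   "let p = f x; w = wfun g W f N x; Wl = lower g p (W p); Xl = lower g p X;
        DW = covd_along g W p (push f x (tang_field g W f x));
        NW = dirderiv (normsq g W) p (N x);
        G = g_inner g p (push f x (grad_h g f (wfun g W f N) x)) (W p)
    in (\<Sum>e\<in>UNIV. \<Sum>b\<in>UNIV. \<Sum>a\<in>UNIV. Bup g f x e b * Wl $ b * lower g p (\<chi> c. cov_deriv g W p c e) $ a * W p $ a)
          = g_inner g p DW (W p)
     \<and> (\<Sum>t\<in>UNIV. \<Sum>c\<in>UNIV. Wl $ t * (kdelta t c - Bmix g f x t c) * X $ c) = w * g_inner g p (N x) X
     \<and> (\<Sum>e\<in>UNIV. \<Sum>b\<in>UNIV. \<Sum>a\<in>UNIV. \<Sum>c\<in>UNIV. Bup g f x e b * Wl $ b * lower g p (\<chi> d. cov_deriv g W p d e) $ a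
            * (kdelta a c - Bmix g f x a c) * X $ c)
          = g_inner g p DW (N x) * g_inner g p (N x) X
     \<and> (\<Sum>i\<in>UNIV. \<Sum>j\<in>UNIV. \<Sum>a\<in>UNIV. hinv g f x $ i $ j * sff g f x a i j * Wl $ a) = real CARD('n) * H x * w
     \<and> (\<Sum>d\<in>UNIV. \<Sum>t\<in>UNIV. \<Sum>i\<in>UNIV. \<Sum>j\<in>UNIV. \<Sum>a\<in>UNIV.
            Wl $ d * Wl $ t * Acoef g f x i d * Acoef g f x j t * sff g f x a i j * Xl $ a)
          = - (G + NW / 2) * g_inner g p (N x) X
     \<and> (\<Sum>d\<in>UNIV. \<Sum>t\<in>UNIV. \<Sum>i\<in>UNIV. \<Sum>j\<in>UNIV. \<Sum>a\<in>UNIV.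
            Wl $ d * Wl $ t * Acoef g f x i d * Acoef g f x j t * sff g f x a i j * Wl $ a)
          = - (G + NW / 2) * w
     \<and> g_inner g p DW (N x) = - NW / 2
     \<and> g_inner g p DW (W p) = - NW / 2 * w"
proof -
  interpret hypersurface_point V g W f x U N
    using metric killing fUV xU dim imm normal by unfold_locales auto
  have "wfun g W f N x = gi Nx Wp" by (simp add: wfun_def)
  moreover have "push f x (tang_field g W f x) = df (tangent_coords Wp)" by (simp add: tang_field_eq)
  moreover have "\<forall>a. (\<Sum>i\<in>UNIV. \<Sum>j\<in>UNIV. hi $ i $ j * sff g f x a i j) = real CARD('n) * H x * Nx $ a"
    using meancurv xU by blast
  moreover note mean_curvature_contract[OF this, of Wp]
    Bup_covd_contract[of Wp Wp] normal_part_contract[of Wp X] Bup_covd_normal_contract[of Wp X]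
    sff_tangent_W_contract[of X] sff_tangent_W_contract[of Wp] covd_tangent_W_N covd_tangent_W_W
  ultimately show ?thesis
    unfolding Let_def by (simp add: mult_ac)
qed

end
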